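(* Consider LinIMED-1 under Assumption 1 with $\sqrt\lambda S\ge1$. Then for every free parameter $0<\Gamma<1$, $$F_2\le 2T\Gamma+O\Big(\frac{d\beta_T\log T}{\Gamma}\Big)\log\Big(1+\frac{L^2\beta_T\log T}{\lambda\Gamma^2}\Big),$$ and with the choice $\Gamma=d\log^{3/2}(T)/\sqrt T$, $F_2\le O(d\sqrt T\log^{3/2}T)$.
   Context: Stochastic linear bandit model: at each round $t=1,\dots,T$ the learner observes an arm set $\mathcal{A}_t$, each arm $a$ with context $x_{t,a}\in\mathbb{R}^d$; it chooses $A_t$, $X_t:=x_{t,A_t}$, and observes $Y_t=\langle\theta^*,X_t\rangle+\eta_t$ with $\eta_t$ conditionally $R$-sub-Gaussian given $A_1,\dots,A_t,Y_1,\dots,Y_{t-1}$. Assumption 1: $\|x_{t,a}\|\le L$, $\|\theta^*\|\le S$, and all gaps $\max_a\langle\theta^*,x_{t,a}\rangle-\langle\theta^*,x_{t,b}\rangle\le1$. LinIMED-1 with parameter $\lambda>0$: $V_0=\lambda I_d$, $W_0=0$, $\hat\theta_t=V_t^{-1}W_t$, $V_t=V_{t-1}+X_tX_t^\top$, $W_t=W_{t-1}+Y_tX_t$; at round $t$, with $\gamma=1/t^2$, $\beta_{t-1}=\big(R\sqrt{d\log\frac{1+(t-1)L^2/\lambda}{\gamma}}+\sqrt\lambda S\big)^2$ (and $\beta_T$ the analogous quantity at $T$); $\hat\mu_{t,a}=\langle\hat\theta_{t-1},x_{t,a}\rangle$, $\hat\Delta_{t,a}=\max_j\hat\mu_{t,j}-\hat\mu_{t,a}$,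 $g_{t,a}=\beta_{t-1}\|x_{t,a}\|^2_{V_{t-1}^{-1}}$ where $\|x\|_A=\sqrt{x^\top Ax}$; the index is $I_{t,a}=-\log g_{t,a}$ for $a=\arg\max_j\hat\mu_{t,j}$ and $I_{t,a}=\hat\Delta^2_{t,a}/g_{t,a}-\log g_{t,a}$ otherwise; $A_t=\arg\min_aI_{t,a}$. Regret decomposition: let $x_t^*=x_{t,a_t^*}$ with $a_t^*=\arg\max_a\langle\theta^*,x_{t,a}\rangle$, $\Delta_t=\langle\theta^*,x^*_t\rangle-\langle\theta^*,X_t\rangle$, $\delta=\Delta_t/\sqrt{\log T}$, $\epsilon=(1-2/\sqrt{\log T})\Delta_t$. Events: $B_t=\{\|\hat\theta_{t-1}-\theta^*\|_{V_{t-1}}\le\sqrt{\beta_{t-1}}\}$, $C_t=\{\max_b\langle\hat\theta_{t-1},x_{t,b}\rangle>\langle\theta^*,x^*_t\rangle-\delta\}$, $D_t=\{\hat\Delta_{t,A_t}\ge\epsilon\}$. Define $F_1=\mathbb{E}\sum_t\Delta_t\mathbb{1}\{B_t,C_t,D_t\}$, $F_2=\mathbb{E}\sum_t\Delta_t\mathbb{1}\{B_t,C_t,\overline D_t\}$, $F_3=\mathbb{E}\sum_t\Delta_t\mathbb{1}\{B_t,\overline C_t\}$, $F_4=\mathbb{E}\sum_t\Delta_t\mathbb{1}\{\overline B_t\}$, so that $R_T=F_1+F_2+F_3+F_4$. $O(\cdot)$ hides constants not depending on $T,d,\Gamma$. *)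

theory Defs
  imports "Jordan_Normal_Form.Gauss_Jordan_Elimination" "HOL-Probability.Probability" "HOL-Probability.Conditional_Expectation"
begin

definition vnorm :: "real Matrix.vec \<Rightarrow> real" where
  "vnorm v = sqrt (v \<bullet> v)"

definition wnorm :: "real mat \<Rightarrow> real Matrix.vec \<Rightarrow> real" where
  "wnorm A v = sqrt (v \<bullet> (A *\<^sub>v v))"

text \<open>Matrix inverse (Gauss-Jordan; the matrices inverted below are positive definite).\<close>
definition minv :: "real mat \<Rightarrow> real mat" where
  "minv A = the (mat_inverse A)"

definition outer :: "real Matrix.vec \<Rightarrow> real mat" where
  "outer v = Matrix.mat (dim_vec v) (dim_vec v) (\<lambda>(i, j). v $ i * v $ j)"

text \<open>At round t there are narms t arms, indexed 0..<narms t, arm a has context ctx t a.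
  theta is the unknown parameter theta^*.\<close>
record lb_instance =
  dim :: nat
  narms :: "nat \<Rightarrow> nat"
  ctx :: "nat \<Rightarrow> nat \<Rightarrow> real Matrix.vec"
  theta :: "real Matrix.vec"

definition lin_beta :: "real \<Rightarrow> real \<Rightarrow> real \<Rightarrow> real \<Rightarrow> nat \<Rightarrow> nat \<Rightarrow> real \<Rightarrow> real" where
  "lin_beta R S L lam d n \<gamma> =
     (R * sqrt (real d * ln ((1 + real n * L\<^sup>2 / lam) / \<gamma>)) + sqrt lam * S)\<^sup>2"

text \<open>beta_{t-1} used at round t, with gamma = 1/t^2.\<close>
definition beta_prev :: "real \<Rightarrow> real \<Rightarrow> real \<Rightarrow> real \<Rightarrow> nat \<Rightarrow> nat \<Rightarrow> real" where
  "beta_prev R S L lam d t = lin_beta R S L lam d (t - 1) (1 / (real t)\<^sup>2)"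

text \<open>The LinIMED index of arm a at round t, given V_{t-1} and W_{t-1}.
  -log 0 is read as +infinity (extended reals).\<close>
definition imed_index ::
  "real \<Rightarrow> real \<Rightarrow> real \<Rightarrow> real \<Rightarrow> ('z) lb_instance_scheme \<Rightarrow> nat \<Rightarrow> real mat \<Rightarrow> real Matrix.vec \<Rightarrow> nat \<Rightarrow> ereal" where
  "imed_index R S L lam P t V W a =
     (let th = minv V *\<^sub>v W;
          mu = (\<lambda>b. th \<bullet> ctx P t b);
          m = Max (mu ` {..<narms P t});
          g = beta_prev R S L lam (dim P) t * (wnorm (minv V) (ctx P t a))\<^sup>2
      in if g = 0 then PInfty
         else if mu a = m then ereal (- ln g)
         else ereal ((m - mu a)\<^sup>2 / g - ln g))"

text \<open>Chosen arm at round t: an arg-min of the index (ties broken by smallest arm index).\<close>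
definition linimed_choice ::
  "real \<Rightarrow> real \<Rightarrow> real \<Rightarrow> real \<Rightarrow> ('z) lb_instance_scheme \<Rightarrow> nat \<Rightarrow> real mat \<Rightarrow> real Matrix.vec \<Rightarrow> nat" where
  "linimed_choice R S L lam P t V W =
     (LEAST a. a < narms P t \<and>
        (\<forall>b < narms P t. imed_index R S L lam P t V W a \<le> imed_index R S L lam P t V W b))"

text \<open>State (V_t, W_t) after t rounds; the noise realisation is omega, eta_t = omega t.\<close>
primrec linimed_state ::
  "real \<Rightarrow> real \<Rightarrow> real \<Rightarrow> real \<Rightarrow> ('z) lb_instance_scheme \<Rightarrow> (nat \<Rightarrow> real) \<Rightarrow> nat \<Rightarrow> real mat \<times> real Matrix.vec" where
  "linimed_state R S L lam P \<omega> 0 = (lam \<cdot>\<^sub>m 1\<^sub>m (dim P), 0\<^sub>v (dim P))"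
| "linimed_state R S L lam P \<omega> (Suc t) =
     (let VW = linimed_state R S L lam P \<omega> t;
          a = linimed_choice R S L lam P (Suc t) (fst VW) (snd VW);
          X = ctx P (Suc t) a;
          Y = theta P \<bullet> X + \<omega> (Suc t)
      in (fst VW + outer X, snd VW + Y \<cdot>\<^sub>v X))"

definition Vprev where "Vprev R S L lam P \<omega> t = fst (linimed_state R S L lam P \<omega> (t - 1))"
definition Wprev where "Wprev R S L lam P \<omega> t = snd (linimed_state R S L lam P \<omega> (t - 1))"

text \<open>A_t, X_t and hat theta_{t-1} (indexed by the round t).\<close>
definition arm where
  "arm R S L lam P \<omega> t = linimed_choice R S L lam P t (Vprev R S L lam P \<omega> t) (Wprev R S L lam P \<omega> t)"
definition thetahat where
  "thetahat R S L lam P \<omega> t = minv (Vprev R S L lam P \<omega> t) *\<^sub>v Wprev R S L lam P \<omega> t"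

definition best_val :: "('z) lb_instance_scheme \<Rightarrow> nat \<Rightarrow> real" where
  "best_val P t = Max ((\<lambda>a. theta P \<bullet> ctx P t a) ` {..<narms P t})"

definition gap where
  "gap R S L lam P \<omega> t = best_val P t - theta P \<bullet> ctx P t (arm R S L lam P \<omega> t)"

definition event_B where
  "event_B R S L lam P \<omega> t \<longleftrightarrow>
     wnorm (Vprev R S L lam P \<omega> t) (thetahat R S L lam P \<omega> t - theta P)
       \<le> sqrt (beta_prev R S L lam (dim P) t)"

definition event_C where
  "event_C R S L lam P T \<omega> t \<longleftrightarrow>
     Max ((\<lambda>b. thetahat R S L lam P \<omega> t \<bullet> ctx P t b) ` {..<narms P t})
       > best_val P t - gap R S L lam P \<omega> t / sqrt (ln (real T))"

definition emp_gap where
  "emp_gap R S L lam P \<omega> t a =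
     Max ((\<lambda>b. thetahat R S L lam P \<omega> t \<bullet> ctx P t b) ` {..<narms P t})
       - thetahat R S L lam P \<omega> t \<bullet> ctx P t a"

definition event_D where
  "event_D R S L lam P T \<omega> t \<longleftrightarrow>
     emp_gap R S L lam P \<omega> t (arm R S L lam P \<omega> t)
       \<ge> (1 - 2 / sqrt (ln (real T))) * gap R S L lam P \<omega> t"

definition F2 :: "real \<Rightarrow> real \<Rightarrow> real \<Rightarrow> real \<Rightarrow> ('z) lb_instance_scheme \<Rightarrow> nat \<Rightarrow> (nat \<Rightarrow> real) measure \<Rightarrow> real" where
  "F2 R S L lam P T M =
     (\<integral>\<omega>. (\<Sum>t\<in>{1..T}. gap R S L lam P \<omega> t *
        (if event_B R S L lam P \<omega> t \<and> event_C R S L lam P T \<omega> t \<and> \<not> event_D R S L lam P T \<omega> t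
         then 1 else 0)) \<partial>M)"

definition beta_T :: "real \<Rightarrow> real \<Rightarrow> real \<Rightarrow> real \<Rightarrow> nat \<Rightarrow> nat \<Rightarrow> real" where
  "beta_T R S L lam d T = lin_beta R S L lam d T (1 / (real T)\<^sup>2)"

definition assumption1 :: "real \<Rightarrow> real \<Rightarrow> ('z) lb_instance_scheme \<Rightarrow> nat \<Rightarrow> bool" where
  "assumption1 S L P T \<longleftrightarrow>
     theta P \<in> carrier_vec (dim P) \<and> vnorm (theta P) \<le> S \<and>
     (\<forall>t\<in>{1..T}. narms P t \<ge> 1 \<and>
        (\<forall>a < narms P t. ctx P t a \<in> carrier_vec (dim P) \<and> vnorm (ctx P t a) \<le> L) \<and>
        (\<forall>b < narms P t. best_val P t - theta P \<bullet> ctx P t b \<le> 1))"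

definition hist :: "nat \<Rightarrow> (nat \<Rightarrow> real) measure" where
  "hist t = sigma UNIV {(\<lambda>\<omega>. \<omega> i) -` A | i A. i \<in> {1..t} \<and> A \<in> sets borel}"

definition subgauss_noise :: "real \<Rightarrow> nat \<Rightarrow> (nat \<Rightarrow> real) measure \<Rightarrow> bool" where
  "subgauss_noise R T M \<longleftrightarrow>
     prob_space M \<and> sets M = sets (\<Pi>\<^sub>M i\<in>(UNIV::nat set). (borel :: real measure)) \<and>
     (\<forall>t\<in>{1..T}. \<forall>s::real.
        integrable M (\<lambda>\<omega>. exp (s * \<omega> t)) \<and>
        (AE \<omega> in M. real_cond_exp M (hist (t - 1)) (\<lambda>\<omega>. exp (s * \<omega> t)) \<omega> \<le> exp (s\<^sup>2 * R\<^sup>2 / 2)))"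

end

theory Submission
  imports Defs "Jordan_Normal_Form.Determinant"
begin

text \<open>On a round counted by \<open>F\<^sub>2\<close> the estimated reward of the played arm exceeds its true reward
  by more than \<open>\<Delta>\<^sub>t/\<surd>log T\<close>, while on \<open>B\<^sub>t\<close> this excess is at most \<open>\<surd>\<beta> \<parallel>X\<^sub>t\<parallel>\<^sub>V\<^sub>\<^sup>-\<^sup>1\<close>; hence
  \<open>\<Delta>\<^sub>t\<^sup>2 \<le> \<beta>\<^sub>T log T \<parallel>X\<^sub>t\<parallel>\<^sup>2\<^sub>V\<^sub>\<^sup>-\<^sup>1\<close>. Rounds with \<open>\<Delta>\<^sub>t \<le> \<Gamma>\<close> cost at most \<open>T\<Gamma>\<close>. On the others
  \<open>\<Delta>\<^sub>t \<le> (1 + \<beta>\<^sub>T log T/\<Gamma>) log (1 + \<parallel>X\<^sub>t\<parallel>\<^sup>2\<^sub>V\<^sub>\<^sup>-\<^sup>1)\<close>, and the elliptical potential lemma bounds the sum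
  of these logarithms by \<open>d log (1 + N L\<^sup>2/(d\<lambda>))\<close> with \<open>N \<le> (\<Sum> \<Delta>\<^sub>t)/\<Gamma>\<close> such rounds, a
  self-bounding inequality for \<open>\<Sum> \<Delta>\<^sub>t\<close>. Everything holds pathwise, so it survives the
  expectation.\<close>

section \<open>Positive definite matrices\<close>

lemma scalar_prod_self_nonneg: "0 \<le> (v :: real Matrix.vec) \<bullet> v"
  using conjugate_square_ge_0_vec[of v] by simp

lemma scalar_prod_self_eq_0_iff:
  "(v :: real Matrix.vec) \<in> carrier_vec n \<Longrightarrow> v \<bullet> v = 0 \<longleftrightarrow> v = 0\<^sub>v n"
  using conjugate_square_eq_0_vec[of v n] by simp

lemma smult_one_mat_mult_vec:
  assumes "w \<in> carrier_vec d"
  shows "(k \<cdot>\<^sub>m 1\<^sub>m d) *\<^sub>v w = (k :: real) \<cdot>\<^sub>v w"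
proof -
  have "(k \<cdot>\<^sub>m 1\<^sub>m d) *\<^sub>v w = k \<cdot>\<^sub>v (1\<^sub>m d *\<^sub>v w)"
    using assms by (intro eq_vecI) (auto simp: mult_mat_vec_def scalar_prod_def sum_distrib_left mult.assoc)
  then show ?thesis using assms by simp
qed

lemma outer_carrier [simp]: "x \<in> carrier_vec n \<Longrightarrow> outer x \<in> carrier_mat n n"
  unfolding outer_def by auto

lemma outer_mult_vec:
  assumes "x \<in> carrier_vec n" "w \<in> carrier_vec n"
  shows "outer x *\<^sub>v w = (x \<bullet> w) \<cdot>\<^sub>v x"
  using assms by (intro eq_vecI)
    (auto simp: outer_def mult_mat_vec_def scalar_prod_def sum_distrib_left ac_simps)

lemma scalar_prod_outer_mult_vec:
  assumes "x \<in> carrier_vec n" "w \<in> carrier_vec n" "u \<in> carrier_vec n"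
  shows "u \<bullet> (outer x *\<^sub>v w) = (x \<bullet> u) * (x \<bullet> w)"
  using assms by (simp add: outer_mult_vec comm_scalar_prod[of u n x])

definition coercive_sym :: "nat \<Rightarrow> real \<Rightarrow> real mat \<Rightarrow> bool" where
  "coercive_sym n c V \<longleftrightarrow> V \<in> carrier_mat n n \<and> c > 0 \<and>
     (\<forall>u\<in>carrier_vec n. \<forall>w\<in>carrier_vec n. u \<bullet> (V *\<^sub>v w) = w \<bullet> (V *\<^sub>v u)) \<and>
     (\<forall>u\<in>carrier_vec n. c * (u \<bullet> u) \<le> u \<bullet> (V *\<^sub>v u))"

lemma coercive_symD:
  assumes "coercive_sym n c V"
  shows "V \<in> carrier_mat n n" "c > 0"
    "\<And>u w. u \<in> carrier_vec n \<Longrightarrow> w \<in> carrier_vec n \<Longrightarrow> u \<bullet> (V *\<^sub>v w) = w \<bullet> (V *\<^sub>v u)"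
    "\<And>u. u \<in> carrier_vec n \<Longrightarrow> c * (u \<bullet> u) \<le> u \<bullet> (V *\<^sub>v u)"
  using assms unfolding coercive_sym_def by auto

lemma coercive_sym_quad_pos:
  assumes "coercive_sym n c V" "u \<in> carrier_vec n" "u \<noteq> 0\<^sub>v n"
  shows "0 < u \<bullet> (V *\<^sub>v u)"
proof -
  have "0 < u \<bullet> u"
    using assms(2,3) scalar_prod_self_nonneg[of u] scalar_prod_self_eq_0_iff[OF assms(2)] by simp
  then have "0 < c * (u \<bullet> u)" using coercive_symD(2)[OF assms(1)] by simp
  also have "\<dots> \<le> u \<bullet> (V *\<^sub>v u)" using coercive_symD(4)[OF assms(1,2)] .
  finally show ?thesis .
qed

lemma coercive_sym_quad_nonneg:
  assumes "coercive_sym n c V" "u \<in> carrier_vec n"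
  shows "0 \<le> u \<bullet> (V *\<^sub>v u)"
  using coercive_sym_quad_pos[OF assms] coercive_symD(1)[OF assms(1)] assms(2)
  by (cases "u = 0\<^sub>v n") (auto intro: less_imp_le)

lemma coercive_sym_det_nonzero:
  assumes "coercive_sym n c V"
  shows "Determinant.det V \<noteq> 0"
proof
  assume "Determinant.det V = 0"
  then obtain v where v: "v \<in> carrier_vec n" "v \<noteq> 0\<^sub>v n" "V *\<^sub>v v = 0\<^sub>v n"
    using det_0_iff_vec_prod_zero_field[of V n] coercive_symD(1)[OF assms] by auto
  show False using coercive_sym_quad_pos[OF assms v(1,2)] v by simp
qed

lemma coercive_sym_minv:
  assumes "coercive_sym n c V"
  shows "V * minv V = 1\<^sub>m n" "minv V * V = 1\<^sub>m n" "minv V \<in> carrier_mat n n"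
proof -
  have V: "V \<in> carrier_mat n n" using coercive_symD(1)[OF assms] .
  have "V \<in> Units (ring_mat TYPE(real) n ())"
    using det_non_zero_imp_unit[OF V coercive_sym_det_nonzero[OF assms]] .
  then obtain B where "mat_inverse V = Some B"
    using mat_inverse(1)[OF V, of "()"] by (cases "mat_inverse V") auto
  then show "V * minv V = 1\<^sub>m n" "minv V * V = 1\<^sub>m n" "minv V \<in> carrier_mat n n"
    using mat_inverse(2)[OF V] by (auto simp: minv_def)
qed

lemma coercive_sym_mult_minv_vec:
  assumes "coercive_sym n c V" "x \<in> carrier_vec n"
  shows "V *\<^sub>v (minv V *\<^sub>v x) = x" "minv V *\<^sub>v x \<in> carrier_vec n"
proof -
  note I = coercive_sym_minv[OF assms(1)]
  have "V *\<^sub>v (minv V *\<^sub>v x) = (V * minv V) *\<^sub>v x"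
    using coercive_symD(1)[OF assms(1)] I assms(2) by (metis assoc_mult_mat_vec)
  then show "V *\<^sub>v (minv V *\<^sub>v x) = x" using I assms(2) by simp
  show "minv V *\<^sub>v x \<in> carrier_vec n" using I assms(2) by auto
qed

lemma quad_diff:
  fixes V :: "real mat"
  assumes V: "V \<in> carrier_mat n n" and u: "u \<in> carrier_vec n" and z: "z \<in> carrier_vec n"
    and sym: "z \<bullet> (V *\<^sub>v u) = u \<bullet> (V *\<^sub>v z)"
  shows "(u - z) \<bullet> (V *\<^sub>v (u - z)) = u \<bullet> (V *\<^sub>v u) - 2 * (u \<bullet> (V *\<^sub>v z)) + z \<bullet> (V *\<^sub>v z)"
proof -
  have Vu: "V *\<^sub>v u \<in> carrier_vec n" and Vz: "V *\<^sub>v z \<in> carrier_vec n" using V u z by auto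
  have "(u - z) \<bullet> (V *\<^sub>v (u - z)) = (u - z) \<bullet> (V *\<^sub>v u) - (u - z) \<bullet> (V *\<^sub>v z)"
    using mult_minus_distrib_mat_vec[OF V u z] scalar_prod_minus_distrib[of "u - z" n "V *\<^sub>v u" "V *\<^sub>v z"]
      u z Vu Vz by simp
  also have "\<dots> = (u \<bullet> (V *\<^sub>v u) - z \<bullet> (V *\<^sub>v u)) - (u \<bullet> (V *\<^sub>v z) - z \<bullet> (V *\<^sub>v z))"
    using minus_scalar_prod_distrib[OF u z Vu] minus_scalar_prod_distrib[OF u z Vz] by simp
  finally show ?thesis using sym by simp
qed

text \<open>The variational characterisation of the dual quadratic form: the maximum of
  \<open>2 u\<^sup>T x - u\<^sup>T V u\<close> over \<open>u\<close> is \<open>x\<^sup>T V\<^sup>-\<^sup>1 x\<close>, attained at \<open>u = V\<^sup>-\<^sup>1 x\<close>.\<close>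

lemma minv_quad_ge:
  assumes V: "coercive_sym n c V" and u: "u \<in> carrier_vec n" and x: "x \<in> carrier_vec n"
  shows "2 * (u \<bullet> x) - u \<bullet> (V *\<^sub>v u) \<le> x \<bullet> (minv V *\<^sub>v x)"
proof -
  define z where "z = minv V *\<^sub>v x"
  have z: "z \<in> carrier_vec n" and Vz: "V *\<^sub>v z = x"
    using coercive_sym_mult_minv_vec[OF V x] z_def by auto
  have "0 \<le> (u - z) \<bullet> (V *\<^sub>v (u - z))" using coercive_sym_quad_nonneg[OF V] u z by simp
  also have "\<dots> = u \<bullet> (V *\<^sub>v u) - 2 * (u \<bullet> x) + z \<bullet> x"
    using quad_diff[OF coercive_symD(1)[OF V] u z coercive_symD(3)[OF V z u]] Vz by simp
  finally show ?thesis using comm_scalar_prod[OF z x] z_def by simp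
qed

lemma minv_quad_nonneg:
  assumes V: "coercive_sym n c V" and x: "x \<in> carrier_vec n"
  shows "0 \<le> x \<bullet> (minv V *\<^sub>v x)"
  using minv_quad_ge[OF V zero_carrier_vec x] coercive_symD(1)[OF V] x by simp

lemma cauchy_schwarz_minv:
  assumes V: "coercive_sym n c V" and u: "u \<in> carrier_vec n" and x: "x \<in> carrier_vec n"
  shows "(u \<bullet> x)\<^sup>2 \<le> (u \<bullet> (V *\<^sub>v u)) * (x \<bullet> (minv V *\<^sub>v x))"
proof -
  let ?a = "u \<bullet> (V *\<^sub>v u)" and ?q = "x \<bullet> (minv V *\<^sub>v x)" and ?p = "u \<bullet> x"
  have var: "2 * (s * ?p) - s * s * ?a \<le> ?q" for s
  proof -
    have "V *\<^sub>v (s \<cdot>\<^sub>v u) = s \<cdot>\<^sub>v (V *\<^sub>v u)"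
      using coercive_symD(1)[OF V] u by (simp add: mult_mat_vec)
    then show ?thesis
      using minv_quad_ge[OF V _ x, of "s \<cdot>\<^sub>v u"] coercive_symD(1)[OF V] u x by simp
  qed
  show ?thesis
  proof (cases "?a = 0")
    case True
    have "?p = 0"
    proof (rule ccontr)
      assume "?p \<noteq> 0"
      then show False using var[of "(?q + 1) / (2 * ?p)"] True by simp
    qed
    then show ?thesis using True by simp
  next
    case False
    then have "?a > 0" using coercive_sym_quad_nonneg[OF V u] by simp
    moreover have "2 * ((?p / ?a) * ?p) - (?p / ?a) * (?p / ?a) * ?a \<le> ?q" by (rule var)
    ultimately show ?thesis by (simp add: field_simps power2_eq_square)
  qed
qed

lemma minv_quad_antimono:
  assumes V: "coercive_sym n c V" and V': "coercive_sym n c' V'" and x: "x \<in> carrier_vec n"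
    and le: "\<And>u. u \<in> carrier_vec n \<Longrightarrow> u \<bullet> (V' *\<^sub>v u) \<le> u \<bullet> (V *\<^sub>v u)"
  shows "x \<bullet> (minv V *\<^sub>v x) \<le> x \<bullet> (minv V' *\<^sub>v x)"
proof -
  define w where "w = minv V *\<^sub>v x"
  have w: "w \<in> carrier_vec n" and Vw: "V *\<^sub>v w = x"
    using coercive_sym_mult_minv_vec[OF V x] w_def by auto
  have "x \<bullet> (minv V *\<^sub>v x) = 2 * (w \<bullet> x) - w \<bullet> (V *\<^sub>v w)"
    using comm_scalar_prod[OF w x] w_def Vw by simp
  also have "\<dots> \<le> 2 * (w \<bullet> x) - w \<bullet> (V' *\<^sub>v w)" using le[OF w] by simp
  also have "\<dots> \<le> x \<bullet> (minv V' *\<^sub>v x)" by (rule minv_quad_ge[OF V' w x])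
  finally show ?thesis .
qed
section \<open>Determinants\<close>

definition bordered ::
  "nat \<Rightarrow> real \<Rightarrow> (nat \<Rightarrow> real) \<Rightarrow> (nat \<Rightarrow> real) \<Rightarrow> (nat \<Rightarrow> nat \<Rightarrow> real) \<Rightarrow> real mat" where
  "bordered n a r c D = Matrix.mat (Suc n) (Suc n) (\<lambda>(i,j).
     if i = 0 then (if j = 0 then a else r (j - 1))
     else if j = 0 then c (i - 1) else D (i - 1) (j - 1))"

abbreviation kdelta :: "nat \<Rightarrow> nat \<Rightarrow> real" where
  "kdelta i j \<equiv> if i = j then 1 else 0"

lemma bordered_carrier [simp]: "bordered n a r c D \<in> carrier_mat (Suc n) (Suc n)"
  by (simp add: bordered_def)

lemma bordered_dim [simp]:
  "dim_row (bordered n a r c D) = Suc n" "dim_col (bordered n a r c D) = Suc n"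
  by (simp_all add: bordered_def)

lemma bordered_index:
  "bordered n a r c D $$ (0,0) = a"
  "j < n \<Longrightarrow> bordered n a r c D $$ (0, Suc j) = r j"
  "i < n \<Longrightarrow> bordered n a r c D $$ (Suc i, 0) = c i"
  "i < n \<Longrightarrow> j < n \<Longrightarrow> bordered n a r c D $$ (Suc i, Suc j) = D i j"
  by (auto simp: bordered_def)

lemma bordered_eq:
  assumes "M \<in> carrier_mat (Suc n) (Suc n)"
  shows "M = bordered n (M $$ (0,0)) (\<lambda>j. M $$ (0, Suc j)) (\<lambda>i. M $$ (Suc i, 0))
               (\<lambda>i j. M $$ (Suc i, Suc j))"
  using assms by (intro eq_matI) (auto simp: bordered_def gr0_conv_Suc)

lemma bordered_cong:
  assumes "a = a'" "\<And>j. j < n \<Longrightarrow> r j = r' j" "\<And>i. i < n \<Longrightarrow> c i = c' i"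
    "\<And>i j. i < n \<Longrightarrow> j < n \<Longrightarrow> D i j = D' i j"
  shows "bordered n a r c D = bordered n a' r' c' D'"
  using assms by (intro eq_matI) (auto simp: bordered_def)

lemma bordered_mult:
  "bordered n a r c D * bordered n a' r' c' D' =
   bordered n (a * a' + (\<Sum>k<n. r k * c' k)) (\<lambda>j. a * r' j + (\<Sum>k<n. r k * D' k j))
     (\<lambda>i. c i * a' + (\<Sum>k<n. D i k * c' k)) (\<lambda>i j. c i * r' j + (\<Sum>k<n. D i k * D' k j))"
  (is "?A * ?B = ?C")
proof (rule eq_matI)
  fix i j assume "i < dim_row ?C" "j < dim_col ?C"
  then have i: "i < Suc n" and j: "j < Suc n" by (auto simp: bordered_def)
  have "(?A * ?B) $$ (i,j) = (\<Sum>k<Suc n. ?A $$ (i,k) * ?B $$ (k,j))"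
    using i j by (simp add: scalar_prod_def atLeast0LessThan del: sum.lessThan_Suc)
  also have "\<dots> = ?A $$ (i,0) * ?B $$ (0,j) + (\<Sum>k<n. ?A $$ (i,Suc k) * ?B $$ (Suc k,j))"
    by (rule sum.lessThan_Suc_shift)
  finally show "(?A * ?B) $$ (i,j) = ?C $$ (i,j)"
    using i j by (cases i; cases j) (auto simp: bordered_index intro!: sum.cong)
qed (auto simp: bordered_def)

lemma transpose_bordered: "transpose_mat (bordered n a r c D) = bordered n a c r (\<lambda>i j. D j i)"
  by (intro eq_matI) (auto simp: bordered_def)

lemma det_bordered_col0:
  "Determinant.det (bordered n a r (\<lambda>_. 0) D) = a * Determinant.det (Matrix.mat n n (\<lambda>(i,j). D i j))"
proof -
  let ?M = "bordered n a r (\<lambda>_. 0) D"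
  obtain A1 A2 A3 A4 where sb: "split_block ?M 1 1 = (A1,A2,A3,A4)"
    by (cases "split_block ?M 1 1") auto
  have dims: "dim_row ?M = 1 + n" "dim_col ?M = 1 + n" by (auto simp: bordered_def)
  note S = split_block[OF sb dims]
  have A3: "A3 = 0\<^sub>m n 1" using sb by (auto simp: split_block_def bordered_def intro!: eq_matI)
  have A1: "Determinant.det A1 = a" using sb S(1) by (auto simp: split_block_def bordered_def det_single)
  have A4: "A4 = Matrix.mat n n (\<lambda>(i,j). D i j)"
    using sb by (auto simp: split_block_def bordered_def intro!: eq_matI)
  have "Determinant.det ?M = Determinant.det A1 * Determinant.det A4"
    by (subst S(5), rule det_four_block_mat_lower_left_zero[OF S(1) S(2) A3 S(4)])
  then show ?thesis using A1 A4 by simp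
qed

lemma det_bordered_row0:
  "Determinant.det (bordered n a (\<lambda>_. 0) c D) = a * Determinant.det (Matrix.mat n n (\<lambda>(i,j). D i j))"
proof -
  have "Determinant.det (bordered n a (\<lambda>_. 0) c D) = Determinant.det (transpose_mat (bordered n a (\<lambda>_. 0) c D))"
    by (rule det_transpose[symmetric, of _ "Suc n"]) simp
  also have "\<dots> = a * Determinant.det (Matrix.mat n n (\<lambda>(i,j). D j i))"
    unfolding transpose_bordered by (rule det_bordered_col0)
  also have "Matrix.mat n n (\<lambda>(i,j). D j i) = transpose_mat (Matrix.mat n n (\<lambda>(i,j). D i j))"
    by (intro eq_matI) auto
  also have "Determinant.det \<dots> = Determinant.det (Matrix.mat n n (\<lambda>(i,j). D i j))"
    by (rule det_transpose[of _ n]) simp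
  finally show ?thesis .
qed

lemma mat_kdelta: "Matrix.mat n n (\<lambda>(i,j). kdelta i j) = 1\<^sub>m n"
  by (intro eq_matI) auto

lemma sum_kdelta_left: "i < n \<Longrightarrow> (\<Sum>k<n. kdelta i k * f k) = (f i :: real)"
  by (simp add: if_distrib[of "\<lambda>x. x * _"] sum.delta cong: if_cong)

lemma sum_kdelta_right: "j < n \<Longrightarrow> (\<Sum>k<n. f k * kdelta k j) = (f j :: real)"
  by (simp add: if_distrib[of "\<lambda>x. _ * x"] sum.delta' cong: if_cong)

text \<open>Sylvester's identity \<open>det (I + w y\<^sup>T) = 1 + y\<^sup>T w\<close>: both sides are the determinant of
  \<open>[[1, -y\<^sup>T], [w, I]]\<close>, reduced by a unitriangular elimination once on each side.\<close>

lemma det_one_add_rank_one: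
  fixes w y :: "real Matrix.vec"
  assumes w: "w \<in> carrier_vec n" and y: "y \<in> carrier_vec n"
  shows "Determinant.det (1\<^sub>m n + Matrix.mat n n (\<lambda>(i,j). w $ i * y $ j)) = 1 + y \<bullet> w"
proof -
  define K where "K = bordered n 1 (\<lambda>j. - y $ j) (\<lambda>i. w $ i) kdelta"
  have KC: "K \<in> carrier_mat (Suc n) (Suc n)" by (simp add: K_def)
  have e1: "bordered n 1 (\<lambda>_. 0) (\<lambda>i. - w $ i) kdelta * K
      = bordered n 1 (\<lambda>j. - y $ j) (\<lambda>_. 0) (\<lambda>i j. kdelta i j + w $ i * y $ j)"
    unfolding K_def bordered_mult by (rule bordered_cong) (auto simp: sum_kdelta_left sum_kdelta_right)
  have "Determinant.det K = Determinant.det (bordered n 1 (\<lambda>_. 0) (\<lambda>i. - w $ i) kdelta * K)"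
    using det_mult[OF bordered_carrier KC] det_bordered_row0[of n 1 _ kdelta] by (simp add: mat_kdelta)
  also have "\<dots> = Determinant.det (Matrix.mat n n (\<lambda>(i,j). kdelta i j + w $ i * y $ j))"
    unfolding e1 by (simp add: det_bordered_col0)
  also have "Matrix.mat n n (\<lambda>(i,j). kdelta i j + w $ i * y $ j)
      = 1\<^sub>m n + Matrix.mat n n (\<lambda>(i,j). w $ i * y $ j)"
    by (intro eq_matI) auto
  finally have k1: "Determinant.det K = Determinant.det (1\<^sub>m n + Matrix.mat n n (\<lambda>(i,j). w $ i * y $ j))" .
  have e2: "bordered n 1 (\<lambda>j. y $ j) (\<lambda>_. 0) kdelta * K = bordered n (1 + y \<bullet> w) (\<lambda>_. 0) (\<lambda>i. w $ i) kdelta"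
    unfolding K_def bordered_mult
    by (rule bordered_cong)
      (use w y in \<open>auto simp: sum_kdelta_left sum_kdelta_right scalar_prod_def atLeast0LessThan\<close>)
  have "Determinant.det K = Determinant.det (bordered n 1 (\<lambda>j. y $ j) (\<lambda>_. 0) kdelta * K)"
    using det_mult[OF bordered_carrier KC] det_bordered_col0[of n 1 _ kdelta] by (simp add: mat_kdelta)
  also have "\<dots> = 1 + y \<bullet> w"
    unfolding e2 by (simp add: det_bordered_row0 mat_kdelta)
  finally show ?thesis using k1 by simp
qed

lemma det_add_outer:
  assumes V: "coercive_sym n c V" and y: "y \<in> carrier_vec n"
  shows "Determinant.det (V + outer y) = Determinant.det V * (1 + y \<bullet> (minv V *\<^sub>v y))"
proof -
  define w where "w = minv V *\<^sub>v y"
  define Wy where "Wy = Matrix.mat n n (\<lambda>(i,j). w $ i * y $ j)"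
  have w: "w \<in> carrier_vec n" and Vw: "V *\<^sub>v w = y"
    using coercive_sym_mult_minv_vec[OF V y] w_def by auto
  have VC: "V \<in> carrier_mat n n" using coercive_symD(1)[OF V] .
  have WyC: "Wy \<in> carrier_mat n n" by (simp add: Wy_def)
  have VWy: "V * Wy = outer y"
  proof (rule eq_matI)
    fix i j assume "i < dim_row (outer y)" "j < dim_col (outer y)"
    then have i: "i < n" and j: "j < n" using y by (auto simp: outer_def)
    have "(V * Wy) $$ (i,j) = (\<Sum>k<n. V $$ (i,k) * w $ k) * y $ j"
      using VC i j by (simp add: Wy_def scalar_prod_def atLeast0LessThan sum_distrib_right mult.assoc)
    also have "(\<Sum>k<n. V $$ (i,k) * w $ k) = (V *\<^sub>v w) $ i"
      using VC w i by (simp add: mult_mat_vec_def scalar_prod_def atLeast0LessThan)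
    finally show "(V * Wy) $$ (i,j) = outer y $$ (i,j)"
      using Vw i j y by (simp add: outer_def)
  qed (use VC y in \<open>auto simp: outer_def Wy_def\<close>)
  have "V + outer y = V * (1\<^sub>m n + Wy)"
    using mult_add_distrib_mat[OF VC _ WyC] VC VWy by simp
  then have "Determinant.det (V + outer y) = Determinant.det V * Determinant.det (1\<^sub>m n + Wy)"
    using det_mult[OF VC, of "1\<^sub>m n + Wy"] WyC by simp
  then show ?thesis using det_one_add_rank_one[OF w y] w_def Wy_def by simp
qed

definition qf :: "nat \<Rightarrow> real mat \<Rightarrow> (nat \<Rightarrow> real) \<Rightarrow> real" where
  "qf n M u = (\<Sum>i<n. \<Sum>j<n. u i * M $$ (i,j) * u j)"

lemma qf_bordered:
  "qf (Suc n) (bordered n a r c D) v = v 0 * a * v 0 + (\<Sum>j<n. v 0 * r j * v (Suc j))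
     + (\<Sum>i<n. v (Suc i) * c i * v 0) + (\<Sum>i<n. \<Sum>j<n. v (Suc i) * D i j * v (Suc j))"
  unfolding qf_def
  by (simp add: sum.lessThan_Suc_shift bordered_index sum.distrib del: sum.lessThan_Suc)

lemma qf_unit:
  assumes "i < n"
  shows "qf n M (\<lambda>j. kdelta j i) = M $$ (i,i)"
proof -
  have "(\<Sum>j<n. kdelta k i * M $$ (k,j) * kdelta j i) = kdelta k i * M $$ (k,i)" for k
    using sum_kdelta_right[OF assms, of "\<lambda>j. kdelta k i * M $$ (k,j)"] .
  then show ?thesis
    unfolding qf_def using sum_kdelta_left[OF assms, of "\<lambda>k. M $$ (k,i)"] by (simp add: eq_commute)
qed

lemma qf_vec:
  assumes "M \<in> carrier_mat d d"
  shows "qf d M u = Matrix.vec d u \<bullet> (M *\<^sub>v Matrix.vec d u)"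
proof -
  have "Matrix.vec d u \<bullet> (M *\<^sub>v Matrix.vec d u) = (\<Sum>i<d. u i * (\<Sum>j<d. M $$ (i,j) * u j))"
    using assms by (simp add: scalar_prod_def mult_mat_vec_def row_def atLeast0LessThan)
  also have "\<dots> = qf d M u" unfolding qf_def by (simp add: sum_distrib_left mult.assoc)
  finally show ?thesis by simp
qed

definition schur_compl :: "nat \<Rightarrow> real \<Rightarrow> (nat \<Rightarrow> real) \<Rightarrow> (nat \<Rightarrow> nat \<Rightarrow> real) \<Rightarrow> real mat" where
  "schur_compl n a c D = Matrix.mat n n (\<lambda>(i,j). D i j - c i * c j / a)"

lemma det_bordered_sym:
  assumes "a \<noteq> 0"
  shows "Determinant.det (bordered n a c c D) = a * Determinant.det (schur_compl n a c D)"
proof -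
  let ?E = "bordered n 1 (\<lambda>_. 0) (\<lambda>i. - c i / a) kdelta"
  have "?E * bordered n a c c D = bordered n a c (\<lambda>_. 0) (\<lambda>i j. D i j - c i * c j / a)"
    unfolding bordered_mult by (rule bordered_cong) (use assms in \<open>auto simp: sum_kdelta_left\<close>)
  moreover have "Determinant.det ?E = 1"
    using det_bordered_row0[of n 1 _ kdelta] by (simp add: mat_kdelta)
  moreover have "Determinant.det (?E * bordered n a c c D) = Determinant.det ?E * Determinant.det (bordered n a c c D)"
    by (rule det_mult[OF bordered_carrier bordered_carrier])
  ultimately show ?thesis
    by (simp add: det_bordered_col0 schur_compl_def)
qed

lemma qf_schur_compl:
  assumes "a > 0"
  shows "qf n (schur_compl n a c D) u
       = qf (Suc n) (bordered n a c c D) (\<lambda>i. if i = 0 then - (\<Sum>j<n. c j * u j) / a else u (i - 1))"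
proof -
  define p where "p = (\<Sum>j<n. c j * u j)"
  have "qf n (schur_compl n a c D) u
      = (\<Sum>i<n. \<Sum>j<n. u i * D i j * u j - (u i * c i) * (c j * u j) / a)"
    unfolding qf_def schur_compl_def by (intro sum.cong refl) (auto simp: algebra_simps)
  also have "\<dots> = (\<Sum>i<n. \<Sum>j<n. u i * D i j * u j) - (\<Sum>i<n. \<Sum>j<n. (u i * c i) * (c j * u j) / a)"
    by (simp add: sum_subtractf)
  also have "(\<Sum>i<n. \<Sum>j<n. (u i * c i) * (c j * u j) / a) = (\<Sum>i<n. u i * c i * p / a)"
    unfolding p_def by (intro sum.cong refl) (simp add: sum_distrib_left sum_divide_distrib)
  also have "\<dots> = (\<Sum>i<n. u i * c i) * p / a"
    by (simp add: sum_distrib_right sum_divide_distrib)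
  also have "(\<Sum>i<n. u i * c i) = p" unfolding p_def by (simp add: mult.commute)
  finally have lhs: "qf n (schur_compl n a c D) u = (\<Sum>i<n. \<Sum>j<n. u i * D i j * u j) - p * p / a" .
  have "(\<Sum>j<n. (- p / a) * c j * u j) = (- p / a) * p"
    unfolding p_def by (simp add: sum_distrib_left mult.assoc)
  moreover have "(\<Sum>i<n. u i * c i * (- p / a)) = p * (- p / a)"
    unfolding sum_distrib_right[symmetric] p_def by (simp add: mult.commute)
  moreover have "(- p / a) * a * (- p / a) + (- p / a) * p + p * (- p / a) = - (p * p / a)"
    using assms by (simp add: field_simps)
  ultimately show ?thesis unfolding lhs qf_bordered p_def[symmetric] by simp
qed

definition pos_def_qf :: "nat \<Rightarrow> real mat \<Rightarrow> bool" where
  "pos_def_qf n M \<longleftrightarrow> (\<forall>u. (\<exists>i<n. u i \<noteq> 0) \<longrightarrow> qf n M u > 0)"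

lemma pos_def_qf_diag_pos:
  assumes "pos_def_qf n M" "i < n"
  shows "M $$ (i,i) > 0"
proof -
  have "qf n M (\<lambda>j. kdelta j i) > 0" using assms unfolding pos_def_qf_def by auto
  then show ?thesis using qf_unit[OF assms(2)] by simp
qed
text \<open>Hadamard's inequality, by induction on the dimension: eliminating the first row and column
  leaves the Schur complement, which is again positive definite and has a smaller diagonal.\<close>

lemma hadamard_ineq:
  assumes "M \<in> carrier_mat n n" "\<And>i j. i < n \<Longrightarrow> j < n \<Longrightarrow> M $$ (i,j) = M $$ (j,i)"
    and "pos_def_qf n M"
  shows "Determinant.det M \<le> (\<Prod>i<n. M $$ (i,i))"
  using assms
proof (induction n arbitrary: M)
  case 0
  then show ?case by simp
next
  case (Suc n)
  define a where "a = M $$ (0,0)"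
  define c where "c = (\<lambda>i. M $$ (Suc i, 0))"
  define D where "D = (\<lambda>i j. M $$ (Suc i, Suc j))"
  have "M = bordered n a (\<lambda>j. M $$ (0, Suc j)) c D"
    unfolding a_def c_def D_def by (rule bordered_eq[OF Suc.prems(1)])
  also have "\<dots> = bordered n a c c D"
  proof (rule bordered_cong)
    show "M $$ (0, Suc j) = c j" if "j < n" for j unfolding c_def using Suc.prems(2) that by blast
  qed auto
  finally have M: "M = bordered n a c c D" .
  have apos: "a > 0" using pos_def_qf_diag_pos[OF Suc.prems(3)] a_def by simp
  let ?S = "schur_compl n a c D"
  have S_pd: "pos_def_qf n ?S"
    unfolding pos_def_qf_def
  proof (intro allI impI)
    fix u :: "nat \<Rightarrow> real" assume "\<exists>i<n. u i \<noteq> 0"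
    then obtain i where i: "i < n" "u i \<noteq> 0" by blast
    define v where "v = (\<lambda>i. if i = 0 then - (\<Sum>j<n. c j * u j) / a else u (i - 1))"
    have "Suc i < Suc n" "v (Suc i) \<noteq> 0" using i by (simp_all add: v_def)
    then have "qf (Suc n) M v > 0" using Suc.prems(3) unfolding pos_def_qf_def by blast
    then show "qf n ?S u > 0" unfolding qf_schur_compl[OF apos] M v_def .
  qed
  have S_sym: "?S $$ (i,j) = ?S $$ (j,i)" if "i < n" "j < n" for i j
    using that Suc.prems(2)[of "Suc i" "Suc j"] by (simp add: schur_compl_def D_def mult.commute)
  have "Determinant.det ?S \<le> (\<Prod>i<n. ?S $$ (i,i))"
    by (rule Suc.IH[OF _ S_sym S_pd]) (simp add: schur_compl_def)
  also have "\<dots> \<le> (\<Prod>i<n. D i i)"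
    using pos_def_qf_diag_pos[OF S_pd] apos
    by (intro prod_mono) (auto simp: schur_compl_def less_imp_le)
  finally have "Determinant.det M \<le> a * (\<Prod>i<n. D i i)"
    unfolding M det_bordered_sym[OF apos[THEN less_imp_neq, symmetric]] using apos by simp
  also have "\<dots> = (\<Prod>i<Suc n. M $$ (i,i))"
    unfolding a_def D_def by (simp add: prod.lessThan_Suc_shift del: prod.lessThan_Suc)
  finally show ?case .
qed
section \<open>Gram matrices and the elliptical potential\<close>

lemma prod_le_mean_power:
  fixes x :: "nat \<Rightarrow> real"
  assumes d: "d \<ge> 1" and x: "\<And>i. i < d \<Longrightarrow> x i > 0"
  shows "(\<Prod>i<d. x i) \<le> ((\<Sum>i<d. x i) / d) ^ d"
proof -
  have P: "(\<Prod>i<d. x i) > 0" by (rule prod_pos) (use x in auto)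
  have "(\<Prod>i<d. x i) powr (1 / d) \<le> (\<Sum>i<d. x i / d)"
    using arith_geom_mean[of "{..<d}" x] d x by (simp add: less_imp_le lessThan_empty_iff)
  then have ge: "(\<Prod>i<d. x i) powr (1 / d) \<le> (\<Sum>i<d. x i) / d"
    by (simp add: sum_divide_distrib)
  have "((\<Prod>i<d. x i) powr (1 / d)) ^ d = ((\<Prod>i<d. x i) powr (1 / d)) powr (real d)"
    by (rule powr_realpow[symmetric]) (use P in \<open>simp only: powr_gt_zero\<close>)
  then have "(\<Prod>i<d. x i) = ((\<Prod>i<d. x i) powr (1 / d)) ^ d"
    using P d by (simp add: powr_powr)
  also have "\<dots> \<le> ((\<Sum>i<d. x i) / d) ^ d"
    by (rule power_mono[OF ge]) simp
  finally show ?thesis .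
qed

lemma atLeastAtMost_Suc_Int:
  "{1..Suc t} \<inter> S = (if Suc t \<in> S then insert (Suc t) ({1..t} \<inter> S) else {1..t} \<inter> S)"
  by (auto simp: le_Suc_eq)

text \<open>The regularised Gram matrix \<open>\<lambda>I + \<Sum> X\<^sub>s X\<^sub>s\<^sup>T\<close> of the rounds \<open>s \<le> t\<close> lying in \<open>S\<close>;
  for \<open>S = UNIV\<close> it is the design matrix \<open>V\<^sub>t\<close> of the algorithm.\<close>

primrec gram :: "nat \<Rightarrow> real \<Rightarrow> (nat \<Rightarrow> real Matrix.vec) \<Rightarrow> nat set \<Rightarrow> nat \<Rightarrow> real mat" where
  "gram d lam X S 0 = lam \<cdot>\<^sub>m 1\<^sub>m d"
| "gram d lam X S (Suc t) =
     (if Suc t \<in> S then gram d lam X S t + outer (X (Suc t)) else gram d lam X S t)"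

locale bounded_design =
  fixes d :: nat and lam :: real and X :: "nat \<Rightarrow> real Matrix.vec" and T :: nat and L :: real
  assumes lam_pos: "lam > 0"
    and X_carrier: "\<And>s. s \<in> {1..T} \<Longrightarrow> X s \<in> carrier_vec d"
    and X_bounded: "\<And>s. s \<in> {1..T} \<Longrightarrow> X s \<bullet> X s \<le> L\<^sup>2"
begin

lemma gram_carrier: "t \<le> T \<Longrightarrow> gram d lam X S t \<in> carrier_mat d d"
  by (induction t) (auto simp: X_carrier)

lemma gram_quad:
  assumes "t \<le> T" "u \<in> carrier_vec d" "w \<in> carrier_vec d"
  shows "u \<bullet> (gram d lam X S t *\<^sub>v w) = lam * (u \<bullet> w) + (\<Sum>s\<in>{1..t} \<inter> S. (X s \<bullet> u) * (X s \<bullet> w))"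
  using assms(1)
proof (induction t)
  case 0
  then show ?case using assms by (simp add: smult_one_mat_mult_vec)
next
  case (Suc t)
  then have t: "t \<le> T" by simp
  show ?case
  proof (cases "Suc t \<in> S")
    case True
    have Xs: "X (Suc t) \<in> carrier_vec d" using Suc.prems by (intro X_carrier) auto
    have "gram d lam X S (Suc t) *\<^sub>v w = gram d lam X S t *\<^sub>v w + outer (X (Suc t)) *\<^sub>v w"
      using True add_mult_distrib_mat_vec[OF gram_carrier[OF t] outer_carrier[OF Xs] assms(3)] by simp
    then have "u \<bullet> (gram d lam X S (Suc t) *\<^sub>v w)
        = u \<bullet> (gram d lam X S t *\<^sub>v w) + u \<bullet> (outer (X (Suc t)) *\<^sub>v w)"
      using scalar_prod_add_distrib[OF assms(2) mult_mat_vec_carrier[OF gram_carrier[OF t] assms(3)]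
          mult_mat_vec_carrier[OF outer_carrier[OF Xs] assms(3)]] by simp
    then show ?thesis
      using Suc.IH[OF t] scalar_prod_outer_mult_vec[OF Xs assms(3) assms(2)] True
      unfolding atLeastAtMost_Suc_Int by (simp add: sum.insert)
  next
    case False
    then show ?thesis using Suc.IH[OF t] unfolding atLeastAtMost_Suc_Int by simp
  qed
qed

lemma gram_coercive:
  assumes "t \<le> T"
  shows "coercive_sym d lam (gram d lam X S t)"
  unfolding coercive_sym_def
proof (intro conjI ballI)
  fix u w :: "real Matrix.vec" assume u: "u \<in> carrier_vec d" and w: "w \<in> carrier_vec d"
  show "u \<bullet> (gram d lam X S t *\<^sub>v w) = w \<bullet> (gram d lam X S t *\<^sub>v u)"
    unfolding gram_quad[OF assms u w] gram_quad[OF assms w u] using comm_scalar_prod[OF u w]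
    by (simp add: mult.commute)
next
  fix u :: "real Matrix.vec" assume u: "u \<in> carrier_vec d"
  show "lam * (u \<bullet> u) \<le> u \<bullet> (gram d lam X S t *\<^sub>v u)"
    unfolding gram_quad[OF assms u u] by (auto intro!: sum_nonneg)
qed (use gram_carrier[OF assms] lam_pos in auto)

lemma gram_diag:
  assumes "t \<le> T" "i < d"
  shows "gram d lam X S t $$ (i,i) = lam + (\<Sum>s\<in>{1..t} \<inter> S. (X s $ i)\<^sup>2)"
  using assms(1)
proof (induction t)
  case 0
  then show ?case using assms by simp
next
  case (Suc t)
  then have t: "t \<le> T" by simp
  have Xs: "X (Suc t) \<in> carrier_vec d" using Suc.prems by (intro X_carrier) auto
  show ?case
    using Suc.IH[OF t] carrier_matD[OF gram_carrier[OF t]] Xs assms(2)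
    unfolding atLeastAtMost_Suc_Int by (simp add: outer_def power2_eq_square sum.insert)
qed

lemma det_gram:
  assumes "t \<le> T"
  shows "Determinant.det (gram d lam X S t) =
    lam ^ d * (\<Prod>s\<in>{1..t} \<inter> S. 1 + X s \<bullet> (minv (gram d lam X S (s - 1)) *\<^sub>v X s))"
  using assms
proof (induction t)
  case 0
  then show ?case by simp
next
  case (Suc t)
  then have t: "t \<le> T" by simp
  have Xs: "X (Suc t) \<in> carrier_vec d" using Suc.prems by (intro X_carrier) auto
  show ?case
    using Suc.IH[OF t] det_add_outer[OF gram_coercive[OF t] Xs]
    unfolding atLeastAtMost_Suc_Int by (simp add: sum.insert)
qed

lemma det_gram_le_prod_diag:
  assumes "t \<le> T"
  shows "Determinant.det (gram d lam X S t) \<le> (\<Prod>i<d. gram d lam X S t $$ (i,i))"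
proof (rule hadamard_ineq)
  let ?G = "gram d lam X S t"
  note G = gram_coercive[OF assms, of S]
  show C: "?G \<in> carrier_mat d d" by (rule gram_carrier[OF assms])
  show "?G $$ (i,j) = ?G $$ (j,i)" if "i < d" "j < d" for i j
    using coercive_symD(3)[OF G, of "unit_vec d i" "unit_vec d j"] that C
    by (simp add: scalar_prod_left_unit scalar_prod_right_unit)
  show "pos_def_qf d ?G"
    unfolding pos_def_qf_def qf_vec[OF C]
  proof (intro allI impI)
    fix u :: "nat \<Rightarrow> real" assume "\<exists>i<d. u i \<noteq> 0"
    then have "Matrix.vec d u \<noteq> 0\<^sub>v d" by (metis index_vec index_zero_vec(1))
    then show "0 < Matrix.vec d u \<bullet> (?G *\<^sub>v Matrix.vec d u)"
      by (intro coercive_sym_quad_pos[OF G]) auto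
  qed
qed

lemma prod_diag_gram_le:
  assumes "d \<ge> 1"
  shows "(\<Prod>i<d. gram d lam X S T $$ (i,i)) \<le> (lam + card ({1..T} \<inter> S) * L\<^sup>2 / d) ^ d"
proof -
  let ?I = "{1..T} \<inter> S"
  let ?a = "\<lambda>i. \<Sum>s\<in>?I. (X s $ i)\<^sup>2"
  have "(\<Sum>i<d. ?a i) = (\<Sum>s\<in>?I. \<Sum>i<d. (X s $ i)\<^sup>2)" by (rule sum.swap)
  also have "\<dots> = (\<Sum>s\<in>?I. X s \<bullet> X s)"
  proof (intro sum.cong refl)
    fix s assume "s \<in> ?I"
    then have "X s \<in> carrier_vec d" using X_carrier by auto
    then show "(\<Sum>i<d. (X s $ i)\<^sup>2) = X s \<bullet> X s"
      by (simp add: scalar_prod_def atLeast0LessThan power2_eq_square)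
  qed
  also have "\<dots> \<le> (\<Sum>s\<in>?I. L\<^sup>2)" by (rule sum_mono) (use X_bounded in auto)
  finally have sum_le: "(\<Sum>i<d. ?a i) \<le> card ?I * L\<^sup>2" by simp
  have "(\<Prod>i<d. gram d lam X S T $$ (i,i)) = (\<Prod>i<d. lam + ?a i)"
    by (simp add: gram_diag)
  also have "\<dots> \<le> ((\<Sum>i<d. lam + ?a i) / d) ^ d"
    using assms lam_pos by (intro prod_le_mean_power) (auto intro!: add_pos_nonneg sum_nonneg)
  also have "(\<Sum>i<d. lam + ?a i) / d = lam + (\<Sum>i<d. ?a i) / d"
    using assms by (simp add: sum.distrib add_divide_distrib)
  also have "(lam + (\<Sum>i<d. ?a i) / d) ^ d \<le> (lam + card ?I * L\<^sup>2 / d) ^ d"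
    using sum_le lam_pos
    by (intro power_mono add_left_mono divide_right_mono)
      (auto intro!: add_nonneg_nonneg divide_nonneg_nonneg sum_nonneg simp: less_imp_le)
  finally show ?thesis .
qed

text \<open>The elliptical potential lemma: the sum of the log-widths is the log-determinant of the
  final Gram matrix, bounded by Hadamard's inequality and AM-GM on its diagonal.\<close>

lemma elliptical_potential:
  assumes "d \<ge> 1"
  shows "(\<Sum>s\<in>{1..T} \<inter> S. ln (1 + X s \<bullet> (minv (gram d lam X S (s - 1)) *\<^sub>v X s)))
     \<le> d * ln (1 + card ({1..T} \<inter> S) * L\<^sup>2 / (d * lam))"
proof -
  let ?I = "{1..T} \<inter> S"
  let ?q = "\<lambda>s. X s \<bullet> (minv (gram d lam X S (s - 1)) *\<^sub>v X s)"
  let ?B = "1 + card ?I * L\<^sup>2 / (d * lam)"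
  have q_pos: "1 + ?q s > 0" if "s \<in> ?I" for s
  proof -
    have "s - 1 \<le> T" "s \<in> {1..T}" using that by auto
    then have "0 \<le> ?q s" by (rule minv_quad_nonneg[OF gram_coercive X_carrier])
    then show ?thesis by simp
  qed
  have "lam ^ d * (\<Prod>s\<in>?I. 1 + ?q s) = Determinant.det (gram d lam X S T)"
    using det_gram[of T S] by simp
  also have "\<dots> \<le> (lam + card ?I * L\<^sup>2 / d) ^ d"
    using det_gram_le_prod_diag[of T S] prod_diag_gram_le[OF assms, of S] by simp
  also have "lam + card ?I * L\<^sup>2 / d = lam * ?B"
    using lam_pos assms by (simp add: field_simps)
  finally have P: "(\<Prod>s\<in>?I. 1 + ?q s) \<le> ?B ^ d"
    using lam_pos by (simp add: power_mult_distrib)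
  have "(\<Sum>s\<in>?I. ln (1 + ?q s)) = ln (\<Prod>s\<in>?I. 1 + ?q s)"
    using q_pos by (intro ln_prod[symmetric]) force+
  also have "\<dots> \<le> ln (?B ^ d)"
    using P q_pos by (intro ln_mono prod_pos) auto
  also have "\<dots> = d * ln ?B" by (rule ln_realpow)
  finally show ?thesis .
qed

end

lemma ln_one_add_ge_div:
  assumes "(q::real) \<ge> 0"
  shows "q / (1 + q) \<le> ln (1 + q)"
proof -
  have "ln (1 / (1 + q)) \<le> 1 / (1 + q) - 1" using assms by (intro ln_le_minus_one) simp
  moreover have "ln (1 / (1 + q)) = - ln (1 + q)" using assms by (simp add: ln_div)
  moreover have "1 / (1 + q) - 1 = - (q / (1 + q))" using assms by (simp add: field_simps)
  ultimately show ?thesis by simp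
qed

lemma ln_one_add_mult_le:
  assumes "(y::real) \<ge> 0"
  shows "ln (1 + real n * y) \<le> real n * ln (1 + y)"
proof -
  have "1 + real n * y \<le> (1 + y) ^ n" by (rule Bernoulli_inequality) (use assms in simp)
  moreover have "0 < 1 + real n * y" using assms by (simp add: add_pos_nonneg)
  ultimately have "ln (1 + real n * y) \<le> ln ((1 + y) ^ n)" by (subst ln_le_cancel_iff) auto
  then show ?thesis by (simp add: ln_realpow)
qed

lemma self_bounding_ln:
  fixes W k m :: real
  assumes W: "W \<ge> 0" and k: "k > 0" and m: "m > 0" and h: "W \<le> k * ln (1 + W / m)"
  shows "W \<le> 2 * k * ln (1 + 2 * k / m)"
proof -
  have p1: "1 + W / m > 0" and p2: "1 + 2 * k / m > 0"
    using W k m by (simp_all add: add_pos_nonneg)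
  have "ln (1 + W / m) - ln (1 + 2 * k / m) = ln ((1 + W / m) / (1 + 2 * k / m))"
    using p1 p2 by (simp add: ln_divide_pos)
  also have "\<dots> \<le> (1 + W / m) / (1 + 2 * k / m) - 1" using p1 p2 by (intro ln_le_minus_one) simp
  also have "(1 + W / m) / (1 + 2 * k / m) = (m + W) / (m + 2 * k)"
  proof -
    have "1 + W / m = (m + W) / m" "1 + 2 * k / m = (m + 2 * k) / m"
      using m by (simp_all add: field_simps)
    then show ?thesis using m by simp
  qed
  also have "\<dots> - 1 = (W - 2 * k) / (m + 2 * k)"
    using m k by (simp add: field_simps)
  also have "\<dots> \<le> W / (m + 2 * k)" using m k by (intro divide_right_mono) auto
  finally have "k * ln (1 + W / m) \<le> k * ln (1 + 2 * k / m) + k * (W / (m + 2 * k))"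
    using k by (metis distrib_left mult_left_mono less_imp_le diff_le_eq add.commute)
  moreover have "k * (W / (m + 2 * k)) \<le> W / 2"
    using W m k by (simp add: field_simps)
  ultimately show ?thesis using h by linarith
qed

lemma large_gap_le_ln:
  fixes g q B \<Gamma> :: real
  assumes "0 < \<Gamma>" "\<Gamma> < g" "g \<le> 1" "g\<^sup>2 \<le> B * q" "0 \<le> q"
  shows "g \<le> (1 + B / \<Gamma>) * ln (1 + q)"
proof -
  have "0 < g\<^sup>2" using assms by simp
  then have "0 < B * q" using assms by linarith
  then have B: "0 < B" using assms(5) by (simp add: zero_less_mult_iff)
  have "g * \<Gamma> \<le> g * g" using assms by (intro mult_left_mono) auto
  also have "\<dots> \<le> B * q" using assms by (simp add: power2_eq_square)
  finally have "g * q \<le> q \<and> g \<le> B * q / \<Gamma>"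
    using assms by (simp add: field_simps mult_left_le_one_le)
  then have "g * (1 + q) \<le> (1 + B / \<Gamma>) * q" by (simp add: algebra_simps)
  then have "g \<le> (1 + B / \<Gamma>) * q / (1 + q)"
    using assms by (simp add: pos_le_divide_eq add_pos_nonneg)
  also have "\<dots> = (1 + B / \<Gamma>) * (q / (1 + q))" by simp
  also have "\<dots> \<le> (1 + B / \<Gamma>) * ln (1 + q)"
    using assms B ln_one_add_ge_div[of q] by (intro mult_left_mono) auto
  finally show ?thesis .
qed

lemma large_gaps_sum_le:
  fixes W N B b \<Gamma> :: real and d :: nat
  assumes W: "W \<ge> 0" and NW: "N * \<Gamma> \<le> W" and N: "N \<ge> 0" and G: "0 < \<Gamma>" "\<Gamma> < 1"
    and B: "B \<ge> 1/2" and b: "b \<ge> 0" and d: "d \<ge> 1"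
    and pot: "W \<le> (1 + B / \<Gamma>) * d * ln (1 + N * b / d)"
  shows "W \<le> 36 * (d * B / \<Gamma>) * ln (1 + b * B / \<Gamma>\<^sup>2)"
proof (cases "b = 0")
  case True
  then show ?thesis using pot by simp
next
  case False
  then have bpos: "b > 0" using b by simp
  define k where "k = (1 + B / \<Gamma>) * d"
  define m where "m = d * \<Gamma> / b"
  have Mle: "1 + B / \<Gamma> \<le> 3 * B / \<Gamma>" using B G by (simp add: field_simps)
  have kpos: "k > 0" unfolding k_def using B G d by (simp add: add_pos_nonneg)
  have mpos: "m > 0" unfolding m_def using G d bpos by simp
  have "N * b / d \<le> W / m"
    unfolding m_def using NW bpos G d by (simp add: field_simps mult_right_mono)
  then have "ln (1 + N * b / d) \<le> ln (1 + W / m)"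
    using bpos d N by (intro ln_mono) (auto intro: add_pos_nonneg)
  then have "W \<le> k * ln (1 + W / m)"
    using pot kpos unfolding k_def by (meson mult_left_mono less_imp_le order_trans)
  then have W2: "W \<le> 2 * k * ln (1 + 2 * k / m)" by (rule self_bounding_ln[OF W kpos mpos])
  have "2 * k / m \<le> 6 * (b * B / \<Gamma>\<^sup>2)"
  proof -
    have "2 * k / m = 2 * (1 + B / \<Gamma>) * b / \<Gamma>"
      unfolding k_def m_def using G d by (simp add: field_simps)
    also have "\<dots> \<le> 2 * (3 * B / \<Gamma>) * b / \<Gamma>"
      using Mle b G by (intro divide_right_mono mult_right_mono) auto
    finally show ?thesis by (simp add: power2_eq_square ac_simps)
  qed
  then have "ln (1 + 2 * k / m) \<le> ln (1 + real 6 * (b * B / \<Gamma>\<^sup>2))"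
    using kpos mpos by (intro ln_mono) (auto intro: add_pos_pos)
  also have "\<dots> \<le> 6 * ln (1 + b * B / \<Gamma>\<^sup>2)"
    using ln_one_add_mult_le[of "b * B / \<Gamma>\<^sup>2" 6] b B by simp
  finally have "2 * k * ln (1 + 2 * k / m) \<le> 2 * (3 * B / \<Gamma> * d) * (6 * ln (1 + b * B / \<Gamma>\<^sup>2))"
    using kpos mpos Mle d B G unfolding k_def
    by (intro mult_mono mult_left_mono mult_right_mono) (auto simp del: of_nat_numeral)
  then show ?thesis using W2 by (simp add: ac_simps)
qed

lemma sum_le_threshold_add_potential:
  fixes g q q' :: "nat \<Rightarrow> real" and E :: "nat set" and b B \<Gamma> :: real and d T :: nat
  assumes E: "E \<subseteq> {1..T}" and G: "0 < \<Gamma>" "\<Gamma> < 1" and B: "B \<ge> 1/2" and b: "b \<ge> 0" and d: "d \<ge> 1"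
    and g01: "\<And>t. t \<in> E \<Longrightarrow> 0 \<le> g t \<and> g t \<le> 1"
    and gq: "\<And>t. t \<in> E \<Longrightarrow> (g t)\<^sup>2 \<le> B * q t"
    and q0: "\<And>t. t \<in> E \<Longrightarrow> 0 \<le> q t"
    and qq: "\<And>t. t \<in> E \<Longrightarrow> q t \<le> q' t"
    and pot: "(\<Sum>t\<in>{t\<in>E. g t > \<Gamma>}. ln (1 + q' t)) \<le> d * ln (1 + card {t\<in>E. g t > \<Gamma>} * b / d)"
  shows "(\<Sum>t\<in>E. g t) \<le> T * \<Gamma> + 36 * (d * B / \<Gamma>) * ln (1 + b * B / \<Gamma>\<^sup>2)"
proof -
  define Ss where "Ss = {t\<in>E. g t > \<Gamma>}"
  have finE: "finite E" using E finite_subset by blast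
  have SsE: "Ss \<subseteq> E" unfolding Ss_def by auto
  have "(\<Sum>t\<in>E - Ss. g t) \<le> (\<Sum>t\<in>E - Ss. \<Gamma>)" by (rule sum_mono) (auto simp: Ss_def)
  also have "\<dots> \<le> T * \<Gamma>"
    using card_mono[OF _ Diff_subset[THEN order_trans, OF E], of Ss] G by (simp add: mult_right_mono)
  finally have small: "(\<Sum>t\<in>E - Ss. g t) \<le> T * \<Gamma>" .
  have "(\<Sum>t\<in>Ss. g t) \<le> (\<Sum>t\<in>Ss. (1 + B / \<Gamma>) * ln (1 + q' t))"
  proof (rule sum_mono)
    fix t assume t: "t \<in> Ss"
    then have tE: "t \<in> E" using SsE by auto
    have "g t \<le> (1 + B / \<Gamma>) * ln (1 + q t)"
      using t g01[OF tE] gq[OF tE] q0[OF tE] G by (intro large_gap_le_ln) (auto simp: Ss_def)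
    also have "\<dots> \<le> (1 + B / \<Gamma>) * ln (1 + q' t)"
      using q0[OF tE] qq[OF tE] B G by (intro mult_left_mono) (auto intro: add_nonneg_nonneg)
    finally show "g t \<le> (1 + B / \<Gamma>) * ln (1 + q' t)" .
  qed
  also have "\<dots> \<le> (1 + B / \<Gamma>) * d * ln (1 + card Ss * b / d)"
    using pot B G unfolding Ss_def by (simp add: sum_distrib_left[symmetric] mult.assoc mult_left_mono)
  finally have large_pot: "(\<Sum>t\<in>Ss. g t) \<le> (1 + B / \<Gamma>) * d * ln (1 + card Ss * b / d)" .
  have "card Ss * \<Gamma> \<le> (\<Sum>t\<in>Ss. g t)"
    using sum_mono[of Ss "\<lambda>_. \<Gamma>" g] by (auto simp: Ss_def)
  then have large: "(\<Sum>t\<in>Ss. g t) \<le> 36 * (d * B / \<Gamma>) * ln (1 + b * B / \<Gamma>\<^sup>2)"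
    using large_pot G B b d g01 SsE
    by (intro large_gaps_sum_le[where N = "card Ss"]) (auto intro!: sum_nonneg)
  have "(\<Sum>t\<in>E. g t) = (\<Sum>t\<in>E - Ss. g t) + (\<Sum>t\<in>Ss. g t)"
    using sum.subset_diff[OF SsE finE] .
  then show ?thesis using small large by linarith
qed

lemma linimed_choice_lt:
  assumes "narms P t \<ge> 1"
  shows "linimed_choice R S L lam P t V W < narms P t"
proof -
  let ?I = "imed_index R S L lam P t V W"
  have fin: "finite (?I ` {..<narms P t})" and ne: "?I ` {..<narms P t} \<noteq> {}"
    using assms by (auto simp: lessThan_empty_iff)
  obtain a0 where "a0 < narms P t" "?I a0 = Min (?I ` {..<narms P t})"
    using Min_in[OF fin ne] by auto
  then have "\<exists>a. a < narms P t \<and> (\<forall>b < narms P t. ?I a \<le> ?I b)" using fin by auto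
  from LeastI_ex[OF this] show ?thesis unfolding linimed_choice_def by blast
qed

abbreviation played_ctx where
  "played_ctx R S L lam P \<omega> \<equiv> (\<lambda>s. ctx P s (arm R S L lam P \<omega> s))"

lemma fst_linimed_state:
  "fst (linimed_state R S L lam P \<omega> n) = gram (dim P) lam (played_ctx R S L lam P \<omega>) UNIV n"
  by (induction n) (simp_all add: Let_def arm_def Vprev_def Wprev_def)

lemma Vprev_eq_gram:
  "Vprev R S L lam P \<omega> t = gram (dim P) lam (played_ctx R S L lam P \<omega>) UNIV (t - 1)"
  unfolding Vprev_def by (rule fst_linimed_state)

lemma arm_lt:
  "assumption1 S L P T \<Longrightarrow> t \<in> {1..T} \<Longrightarrow> arm R S L lam P \<omega> t < narms P t"
  unfolding arm_def assumption1_def by (intro linimed_choice_lt) auto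

lemma played_ctx_carrier:
  "assumption1 S L P T \<Longrightarrow> t \<in> {1..T} \<Longrightarrow> played_ctx R S L lam P \<omega> t \<in> carrier_vec (dim P)"
  using arm_lt[of S L P T t R lam \<omega>] unfolding assumption1_def by auto

lemma played_ctx_sq_le:
  assumes "assumption1 S L P T" "t \<in> {1..T}" "L \<ge> 0"
  shows "played_ctx R S L lam P \<omega> t \<bullet> played_ctx R S L lam P \<omega> t \<le> L\<^sup>2"
proof -
  let ?x = "played_ctx R S L lam P \<omega> t"
  have "sqrt (?x \<bullet> ?x) \<le> L"
    using arm_lt[OF assms(1,2)] assms unfolding assumption1_def vnorm_def by auto
  then show ?thesis by (rule sqrt_le_D)
qed

lemma bounded_design_played_ctx:
  assumes "assumption1 S L P T" "lam > 0" "L \<ge> 0"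
  shows "bounded_design (dim P) lam (played_ctx R S L lam P \<omega>) T L"
  by unfold_locales (use assms played_ctx_carrier[OF assms(1)] played_ctx_sq_le[OF assms(1)] in auto)

lemma snd_linimed_state_carrier:
  assumes "assumption1 S L P T" "n \<le> T"
  shows "snd (linimed_state R S L lam P \<omega> n) \<in> carrier_vec (dim P)"
  using assms(2)
proof (induction n)
  case 0
  then show ?case by simp
next
  case (Suc n)
  have "played_ctx R S L lam P \<omega> (Suc n) \<in> carrier_vec (dim P)"
    using played_ctx_carrier[OF assms(1)] Suc.prems by auto
  then show ?case using Suc by (simp add: Let_def arm_def Vprev_def Wprev_def)
qed

lemma gap_nonneg_le_one:
  assumes "assumption1 S L P T" "t \<in> {1..T}"
  shows "0 \<le> gap R S L lam P \<omega> t \<and> gap R S L lam P \<omega> t \<le> 1"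
proof -
  have a: "arm R S L lam P \<omega> t < narms P t" by (rule arm_lt[OF assms])
  then have "theta P \<bullet> ctx P t (arm R S L lam P \<omega> t) \<le> best_val P t"
    unfolding best_val_def by (intro Max_ge) auto
  then show ?thesis using assms a unfolding gap_def assumption1_def by auto
qed

lemma gap_sq_le_width:
  assumes A: "assumption1 S L P T" and t: "t \<in> {1..T}" and lam: "lam > 0" and L: "L \<ge> 0"
    and T2: "T \<ge> 2"
    and B: "event_B R S L lam P \<omega> t" and C: "event_C R S L lam P T \<omega> t"
    and nD: "\<not> event_D R S L lam P T \<omega> t"
  shows "(gap R S L lam P \<omega> t)\<^sup>2 \<le> beta_prev R S L lam (dim P) t * ln (real T) *
     (played_ctx R S L lam P \<omega> t \<bullet> (minv (Vprev R S L lam P \<omega> t) *\<^sub>v played_ctx R S L lam P \<omega> t))"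
proof -
  interpret bounded_design "dim P" lam "played_ctx R S L lam P \<omega>" T L
    by (rule bounded_design_played_ctx[OF A lam L])
  define V where "V = Vprev R S L lam P \<omega> t"
  define x where "x = played_ctx R S L lam P \<omega> t"
  define th where "th = thetahat R S L lam P \<omega> t"
  define g where "g = gap R S L lam P \<omega> t"
  define \<beta> where "\<beta> = beta_prev R S L lam (dim P) t"
  define sl where "sl = sqrt (ln (real T))"
  define mx where "mx = Max ((\<lambda>b. th \<bullet> ctx P t b) ` {..<narms P t})"
  have t1: "t - 1 \<le> T" using t by auto
  have V: "coercive_sym (dim P) lam V" unfolding V_def Vprev_eq_gram by (rule gram_coercive[OF t1])
  have thc: "th \<in> carrier_vec (dim P)"
    unfolding th_def thetahat_def V_def[symmetric] Wprev_def
    using coercive_sym_minv(3)[OF V] snd_linimed_state_carrier[OF A t1] by auto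
  have tc: "theta P \<in> carrier_vec (dim P)" using A unfolding assumption1_def by auto
  then have uc: "th - theta P \<in> carrier_vec (dim P)" using thc by simp
  have xc: "x \<in> carrier_vec (dim P)" unfolding x_def by (rule X_carrier[OF t])
  have "\<beta> \<ge> 0" unfolding \<beta>_def beta_prev_def lin_beta_def by simp
  then have uVu: "(th - theta P) \<bullet> (V *\<^sub>v (th - theta P)) \<le> \<beta>"
    using B coercive_sym_quad_nonneg[OF V uc] unfolding event_B_def wnorm_def V_def \<beta>_def th_def
    by simp
  have slpos: "sl > 0" unfolding sl_def using T2 by simp
  have "mx > best_val P t - g / sl"
    using C unfolding event_C_def mx_def th_def g_def sl_def .
  moreover have "mx - th \<bullet> x < (1 - 2 / sl) * g"
    using nD unfolding event_D_def emp_gap_def mx_def th_def g_def sl_def x_def by simp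
  moreover have "g = best_val P t - theta P \<bullet> x" unfolding g_def gap_def x_def by simp
  moreover have "(1 - 2 / sl) * g = g - 2 * (g / sl)" by (simp add: algebra_simps)
  ultimately have "g / sl < th \<bullet> x - theta P \<bullet> x" by linarith
  also have "\<dots> = (th - theta P) \<bullet> x"
    using minus_scalar_prod_distrib[OF thc tc xc] by simp
  finally have "(g / sl)\<^sup>2 \<le> ((th - theta P) \<bullet> x)\<^sup>2"
    using gap_nonneg_le_one[OF A t] slpos unfolding g_def by (intro power_mono) auto
  also have "\<dots> \<le> ((th - theta P) \<bullet> (V *\<^sub>v (th - theta P))) * (x \<bullet> (minv V *\<^sub>v x))"
    by (rule cauchy_schwarz_minv[OF V uc xc])
  also have "\<dots> \<le> \<beta> * (x \<bullet> (minv V *\<^sub>v x))"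
    using uVu minv_quad_nonneg[OF V xc] by (intro mult_right_mono) auto
  finally show ?thesis
    using slpos unfolding sl_def g_def \<beta>_def x_def V_def
    by (simp add: power_divide divide_le_eq mult_ac)
qed

lemma (in bounded_design) minv_gram_antimono:
  assumes "t \<le> T" "S \<subseteq> S'" "x \<in> carrier_vec d"
  shows "x \<bullet> (minv (gram d lam X S' t) *\<^sub>v x) \<le> x \<bullet> (minv (gram d lam X S t) *\<^sub>v x)"
proof (rule minv_quad_antimono[OF gram_coercive gram_coercive assms(3)])
  fix u :: "real Matrix.vec" assume u: "u \<in> carrier_vec d"
  have "(\<Sum>s\<in>{1..t} \<inter> S. (X s \<bullet> u) * (X s \<bullet> u)) \<le> (\<Sum>s\<in>{1..t} \<inter> S'. (X s \<bullet> u) * (X s \<bullet> u))"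
    using assms(2) by (intro sum_mono2) auto
  then show "u \<bullet> (gram d lam X S t *\<^sub>v u) \<le> u \<bullet> (gram d lam X S' t *\<^sub>v u)"
    unfolding gram_quad[OF assms(1) u u] by simp
qed (use assms(1) in auto)

lemma beta_prev_le_beta_T:
  assumes t: "1 \<le> t" "t \<le> T" and R: "R \<ge> 0" and S: "S \<ge> 0" and lam: "lam > 0"
  shows "beta_prev R S L lam d t \<le> beta_T R S L lam d T"
proof -
  define x where "x = (1 + real (t - 1) * L\<^sup>2 / lam) * (real t)\<^sup>2"
  define y where "y = (1 + real T * L\<^sup>2 / lam) * (real T)\<^sup>2"
  have a: "1 \<le> 1 + real (t - 1) * L\<^sup>2 / lam" "1 \<le> (real t)\<^sup>2" using lam t by simp_all
  then have x1: "1 \<le> x" unfolding x_def by (metis mult_mono' mult_1 zero_le_one)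
  have "1 + real (t - 1) * L\<^sup>2 / lam \<le> 1 + real T * L\<^sup>2 / lam"
    using t lam by (intro add_left_mono divide_right_mono mult_right_mono) auto
  then have "x \<le> y" unfolding x_def y_def using a t by (intro mult_mono) auto
  then have "sqrt (real d * ln x) \<le> sqrt (real d * ln y)"
    using x1 by (intro real_sqrt_le_mono mult_left_mono) auto
  then have "R * sqrt (real d * ln x) + sqrt lam * S \<le> R * sqrt (real d * ln y) + sqrt lam * S"
    using R by (simp add: mult_left_mono)
  moreover have "0 \<le> R * sqrt (real d * ln x) + sqrt lam * S" using R S lam x1 by simp
  ultimately show ?thesis
    unfolding beta_prev_def beta_T_def lin_beta_def x_def y_def by (simp add: power_mono)
qed

lemma beta_T_ge_one:
  assumes "R \<ge> 0" "lam > 0" "sqrt lam * S \<ge> 1" "T \<ge> 1"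
  shows "beta_T R S L lam d T \<ge> 1"
proof -
  have "1 \<le> (1 + real T * L\<^sup>2 / lam) * (real T)\<^sup>2"
    using assms by (intro mult_ge1_I) auto
  then have "1 \<le> R * sqrt (real d * ln ((1 + real T * L\<^sup>2 / lam) / (1 / (real T)\<^sup>2))) + sqrt lam * S"
    using assms by (simp add: add_increasing)
  then show ?thesis unfolding beta_T_def lin_beta_def by (simp add: one_le_power)
qed

text \<open>The widths of the rounds with \<open>\<Delta>\<^sub>t > \<Gamma>\<close> are dominated by those of the Gram matrix built
  from these rounds alone, to which the elliptical potential lemma applies.\<close>

lemma F2_integrand_le:
  fixes R S L lam \<Gamma> :: real and P :: "('z) lb_instance_scheme"
  assumes lam: "lam > 0" and R: "R \<ge> 0" and S: "S \<ge> 0" and L: "L \<ge> 0" and S1: "sqrt lam * S \<ge> 1"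
    and d: "dim P \<ge> 1" and T2: "T \<ge> 2" and A: "assumption1 S L P T" and G: "0 < \<Gamma>" "\<Gamma> < 1"
  shows "(\<Sum>t\<in>{1..T}. gap R S L lam P \<omega> t *
        (if event_B R S L lam P \<omega> t \<and> event_C R S L lam P T \<omega> t \<and> \<not> event_D R S L lam P T \<omega> t
         then 1 else 0))
     \<le> T * \<Gamma> + 36 * (real (dim P) * beta_T R S L lam (dim P) T * ln (real T) / \<Gamma>)
          * ln (1 + L\<^sup>2 * beta_T R S L lam (dim P) T * ln (real T) / (lam * \<Gamma>\<^sup>2))"
proof -
  interpret bounded_design "dim P" lam "played_ctx R S L lam P \<omega>" T L
    by (rule bounded_design_played_ctx[OF A lam L])
  let ?X = "played_ctx R S L lam P \<omega>"
  let ?g = "gap R S L lam P \<omega>"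
  define \<beta> where "\<beta> = beta_T R S L lam (dim P) T"
  define l where "l = ln (real T)"
  define E where "E = {t\<in>{1..T}. event_B R S L lam P \<omega> t \<and> event_C R S L lam P T \<omega> t
                                  \<and> \<not> event_D R S L lam P T \<omega> t}"
  define Ss where "Ss = {t\<in>E. ?g t > \<Gamma>}"
  define q where "q = (\<lambda>t. ?X t \<bullet> (minv (Vprev R S L lam P \<omega> t) *\<^sub>v ?X t))"
  define q' where "q' = (\<lambda>t. ?X t \<bullet> (minv (gram (dim P) lam ?X Ss (t - 1)) *\<^sub>v ?X t))"
  have "ln 2 \<le> l" unfolding l_def using T2 by simp
  then have l: "l \<ge> 1/2" using ln2_ge_two_thirds by simp
  have "1 \<le> \<beta>" unfolding \<beta>_def using T2 by (intro beta_T_ge_one[OF R lam S1]) simp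
  then have "1 * (1/2) \<le> \<beta> * l" using l by (intro mult_mono) auto
  then have \<beta>l: "1/2 \<le> \<beta> * l" by simp
  have E: "E \<subseteq> {1..T}" unfolding E_def by auto
  have "(\<Sum>t\<in>{1..T}. ?g t * (if event_B R S L lam P \<omega> t \<and> event_C R S L lam P T \<omega> t
                              \<and> \<not> event_D R S L lam P T \<omega> t then 1 else 0))
      = (\<Sum>t\<in>{1..T}. if event_B R S L lam P \<omega> t \<and> event_C R S L lam P T \<omega> t
                              \<and> \<not> event_D R S L lam P T \<omega> t then ?g t else 0)"
    by (intro sum.cong) auto
  also have "\<dots> = (\<Sum>t\<in>E. ?g t)" unfolding E_def by (rule sum.inter_filter[symmetric]) simp
  also have "\<dots> \<le> T * \<Gamma> + 36 * (dim P * (\<beta> * l) / \<Gamma>) * ln (1 + (L\<^sup>2 / lam) * (\<beta> * l) / \<Gamma>\<^sup>2)"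
  proof (rule sum_le_threshold_add_potential[OF E G \<beta>l _ d, where q = q and q' = q'])
    fix t assume tE: "t \<in> E"
    then have t: "t \<in> {1..T}" using E by auto
    then have t1: "t - 1 \<le> T" by auto
    note V = gram_coercive[OF t1, of UNIV, folded Vprev_eq_gram]
    show "0 \<le> ?g t \<and> ?g t \<le> 1" by (rule gap_nonneg_le_one[OF A t])
    show q0: "0 \<le> q t" unfolding q_def by (rule minv_quad_nonneg[OF V X_carrier[OF t]])
    have "(?g t)\<^sup>2 \<le> beta_prev R S L lam (dim P) t * l * q t"
      using tE gap_sq_le_width[OF A t lam L T2] unfolding q_def l_def E_def by auto
    also have "\<dots> \<le> \<beta> * l * q t"
      using beta_prev_le_beta_T[of t T R S lam L "dim P"] t R S lam l q0 unfolding \<beta>_def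
      by (intro mult_right_mono) auto
    finally show "(?g t)\<^sup>2 \<le> \<beta> * l * q t" .
    show "q t \<le> q' t"
      unfolding q_def q'_def Vprev_eq_gram by (rule minv_gram_antimono[OF t1 _ X_carrier[OF t]]) simp
  next
    have "{1..T} \<inter> Ss = Ss" using E unfolding Ss_def by auto
    then show "(\<Sum>t\<in>{t\<in>E. ?g t > \<Gamma>}. ln (1 + q' t))
        \<le> dim P * ln (1 + card {t\<in>E. ?g t > \<Gamma>} * (L\<^sup>2 / lam) / dim P)"
      using elliptical_potential[OF d, of Ss] unfolding q'_def Ss_def[symmetric]
      by (simp add: mult.commute)
  qed (use lam in simp)
  finally show ?thesis unfolding \<beta>_def l_def by (simp add: mult.assoc)
qed

lemma integral_le_const:
  fixes f :: "'a \<Rightarrow> real"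
  assumes "prob_space M" "\<And>x. f x \<le> K" "0 \<le> K"
  shows "integral\<^sup>L M f \<le> K"
proof (cases "integrable M f")
  case True
  interpret prob_space M by fact
  have "integral\<^sup>L M f \<le> integral\<^sup>L M (\<lambda>_. K)" by (rule integral_mono[OF True]) (auto simp: assms)
  then show ?thesis by (simp add: prob_space)
next
  case False
  then show ?thesis using assms by (simp add: not_integrable_integral_eq)
qed

text \<open>The sub-Gaussian noise assumption only contributes that \<open>M\<close> is a probability measure:
  the bound on \<open>F\<^sub>2\<close> is deterministic.\<close>

lemma F2_le:
  fixes R S L lam :: real
  assumes "lam > 0" and "R \<ge> 0" and "S \<ge> 0" and "L \<ge> 0" and "sqrt lam * S \<ge> 1"
    and "dim P \<ge> 1" and "T \<ge> 2" and "assumption1 S L P T" and "subgauss_noise R T M"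
    and "0 < \<Gamma>" "\<Gamma> < 1"
  shows "F2 R S L lam P T M \<le> 2 * real T * \<Gamma>
           + 36 * (real (dim P) * beta_T R S L lam (dim P) T * ln (real T) / \<Gamma>)
               * ln (1 + L\<^sup>2 * beta_T R S L lam (dim P) T * ln (real T) / (lam * \<Gamma>\<^sup>2))"
  unfolding F2_def
proof (rule integral_le_const)
  show "prob_space M" using assms(9) unfolding subgauss_noise_def by simp
  have "0 \<le> beta_T R S L lam (dim P) T" unfolding beta_T_def lin_beta_def by simp
  then show "0 \<le> 2 * real T * \<Gamma>
           + 36 * (real (dim P) * beta_T R S L lam (dim P) T * ln (real T) / \<Gamma>)
               * ln (1 + L\<^sup>2 * beta_T R S L lam (dim P) T * ln (real T) / (lam * \<Gamma>\<^sup>2))"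
    using assms by (intro add_nonneg_nonneg mult_nonneg_nonneg) auto
  fix \<omega>
  show "(\<Sum>t\<in>{1..T}. gap R S L lam P \<omega> t *
        (if event_B R S L lam P \<omega> t \<and> event_C R S L lam P T \<omega> t \<and> \<not> event_D R S L lam P T \<omega> t
         then 1 else 0)) \<le> 2 * real T * \<Gamma>
           + 36 * (real (dim P) * beta_T R S L lam (dim P) T * ln (real T) / \<Gamma>)
               * ln (1 + L\<^sup>2 * beta_T R S L lam (dim P) T * ln (real T) / (lam * \<Gamma>\<^sup>2))"
    using F2_integrand_le[OF assms(1-8,10,11), of \<omega>] assms(10) mult_nonneg_nonneg[of "real T" \<Gamma>]
    by linarith
qed
lemma ln_one_add_mult_le_ln:
  fixes a x :: real
  assumes a: "0 \<le> a" and x: "2 \<le> x"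
  shows "ln (1 + a * x) \<le> (3/2 * ln (1 + a) + 1) * ln x"
proof -
  have "ln 2 \<le> ln x" using x by simp
  then have lx: "2/3 \<le> ln x" using ln2_ge_two_thirds by simp
  have "ln (1 + a * x) \<le> ln ((1 + a) * x)"
    using a x by (intro ln_mono) (auto simp: algebra_simps intro: add_pos_nonneg)
  also have "\<dots> = ln (1 + a) + ln x" using a x by (simp add: ln_mult add_pos_nonneg)
  also have "ln (1 + a) \<le> 3/2 * ln (1 + a) * ln x"
    using a lx mult_left_mono[of 1 "3/2 * ln x" "ln (1 + a)"] by (simp add: mult_ac)
  finally show ?thesis by (simp add: algebra_simps)
qed

definition beta_rate :: "real \<Rightarrow> real \<Rightarrow> real \<Rightarrow> real \<Rightarrow> real" where
  "beta_rate R S L lam = 2 * R\<^sup>2 * (3/2 * ln (1 + L\<^sup>2 / lam) + 3) + 3 * lam * S\<^sup>2"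

lemma beta_T_le:
  assumes lam: "lam > 0" and d: "d \<ge> 1" and T: "T \<ge> 2"
  shows "beta_T R S L lam d T \<le> beta_rate R S L lam * (d * ln T)"
proof -
  define b where "b = L\<^sup>2 / lam"
  define l where "l = ln (real T)"
  define ell where "ell = ln ((1 + real T * L\<^sup>2 / lam) / (1 / (real T)\<^sup>2))"
  have b: "b \<ge> 0" unfolding b_def using lam by simp
  have "ln 2 \<le> l" unfolding l_def using T by simp
  then have l: "2/3 \<le> l" using ln2_ge_two_thirds by simp
  then have dl: "2/3 \<le> d * l" using d mult_mono[of 1 d "2/3" l] by simp
  have "(1 + real T * L\<^sup>2 / lam) / (1 / (real T)\<^sup>2) = (1 + b * T) * (real T)\<^sup>2"
    unfolding b_def by simp
  moreover have "0 < 1 + b * T" using b by (simp add: add_pos_nonneg)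
  ultimately have ell_eq: "ell = ln (1 + b * T) + 2 * l"
    using T unfolding ell_def l_def by (simp add: ln_mult ln_realpow)
  also have "\<dots> \<le> (3/2 * ln (1 + b) + 3) * l"
    using ln_one_add_mult_le_ln[OF b, of T] T unfolding l_def by (simp add: algebra_simps)
  finally have ell: "ell \<le> (3/2 * ln (1 + b) + 3) * l" .
  have ell0: "0 \<le> ell" unfolding ell_eq using b l by simp
  let ?a = "R * sqrt (d * ell)" and ?c = "sqrt lam * S"
  have "beta_T R S L lam d T = (?a + ?c)\<^sup>2" unfolding beta_T_def lin_beta_def ell_def by simp
  also have "\<dots> \<le> 2 * ?a\<^sup>2 + 2 * ?c\<^sup>2"
    using zero_le_power2[of "?a - ?c"] by (simp add: power2_eq_square algebra_simps)
  also have "\<dots> = 2 * R\<^sup>2 * (d * ell) + 2 * (lam * S\<^sup>2)"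
    using ell0 lam by (simp add: power_mult_distrib)
  also have "\<dots> \<le> 2 * R\<^sup>2 * (d * ((3/2 * ln (1 + b) + 3) * l)) + 3 * lam * S\<^sup>2 * (d * l)"
    using ell lam dl d mult_left_mono[of "2/3 * 3" "d * l * 3" "lam * S\<^sup>2"]
    by (intro add_mono mult_left_mono) (auto simp: mult_ac)
  finally show ?thesis unfolding beta_rate_def b_def l_def by (simp add: algebra_simps)
qed

text \<open>With \<open>\<Gamma> = d log\<^sup>3\<^sup>/\<^sup>2 T / \<surd>T\<close> and \<open>\<beta> = O(d log T)\<close> both terms of the threshold bound
  are \<open>O(d \<surd>T log\<^sup>3\<^sup>/\<^sup>2 T)\<close>; the logarithm's argument is \<open>O(T)\<close>.\<close>

lemma threshold_bound_at_choice:
  fixes \<beta> c b :: real and d T :: nat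
  assumes d: "d \<ge> 1" and T: "T \<ge> 2" and \<beta>: "0 \<le> \<beta>" "\<beta> \<le> c * (d * ln T)" and b: "b \<ge> 0"
  defines "\<Gamma> \<equiv> real d * ln (real T) powr (3/2) / sqrt (real T)"
  shows "2 * real T * \<Gamma> + 36 * (real d * \<beta> * ln T / \<Gamma>) * ln (1 + b * \<beta> * ln T / \<Gamma>\<^sup>2)
     \<le> (2 + 36 * c * (3/2 * ln (1 + 3/2 * b * c) + 1)) * real d * sqrt (real T) * ln (real T) powr (3/2)"
proof -
  define l where "l = ln (real T)"
  define sl where "sl = sqrt l"
  define sT where "sT = sqrt (real T)"
  have "ln 2 \<le> l" unfolding l_def using T by simp
  then have l: "2/3 \<le> l" using ln2_ge_two_thirds by simp
  then have dl: "2/3 \<le> d * l" using d mult_mono[of 1 d "2/3" l] by simp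
  have sl: "sl > 0" "sl * sl = l" unfolding sl_def using l by simp_all
  have sT: "sT > 0" "sT * sT = T" unfolding sT_def using T by simp_all
  have "l powr (3/2) = l powr (1 + 1/2)" by simp
  also have "\<dots> = l powr 1 * l powr (1/2)" by (rule powr_add)
  finally have p: "l powr (3/2) = l * sl"
    using l unfolding sl_def by (simp add: powr_half_sqrt)
  have "0 \<le> c * (d * l)" using \<beta> unfolding l_def by linarith
  then have c: "c \<ge> 0" using dl by (simp add: zero_le_mult_iff)
  have \<Gamma>: "\<Gamma> = d * l * sl / sT" unfolding \<Gamma>_def l_def[symmetric] sT_def[symmetric] p
    by (simp add: mult.assoc)
  have first: "2 * real T * \<Gamma> = 2 * d * sT * (l * sl)"
    unfolding \<Gamma> using sT by (simp add: field_simps)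
  have "real d * \<beta> * l / \<Gamma> = \<beta> * sT / sl" unfolding \<Gamma> using d l sl sT by (simp add: field_simps)
  also have "\<dots> \<le> c * (d * l) * sT / sl"
    using \<beta> sT sl unfolding l_def by (intro divide_right_mono mult_right_mono) auto
  also have "\<dots> = c * d * sT * sl" using sl by (simp add: field_simps)
  finally have ratio: "real d * \<beta> * l / \<Gamma> \<le> c * d * sT * sl" .
  have "b * \<beta> * l / \<Gamma>\<^sup>2 = b * \<beta> * T / (d * d * l * l)"
    unfolding \<Gamma> power2_eq_square using d l sl sT by (simp add: field_simps)
  also have "\<dots> \<le> b * (c * (d * l)) * T / (d * d * l * l)"
    using \<beta> b l unfolding l_def by (intro divide_right_mono mult_right_mono mult_left_mono) auto
  also have "\<dots> = b * c * T * (1 / (d * l))" using d l by (simp add: field_simps)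
  also have "\<dots> \<le> b * c * T * (3/2)"
    using dl b c by (intro mult_left_mono) (auto simp: divide_le_eq)
  finally have "ln (1 + b * \<beta> * l / \<Gamma>\<^sup>2) \<le> ln (1 + (3/2 * b * c) * T)"
    using b \<beta> l by (intro ln_mono) (auto simp: ac_simps intro: add_pos_nonneg)
  also have "\<dots> \<le> (3/2 * ln (1 + 3/2 * b * c) + 1) * l"
    unfolding l_def using b c T by (intro ln_one_add_mult_le_ln) auto
  finally have lnarg: "ln (1 + b * \<beta> * l / \<Gamma>\<^sup>2) \<le> (3/2 * ln (1 + 3/2 * b * c) + 1) * l" .
  have "36 * (real d * \<beta> * l / \<Gamma>) * ln (1 + b * \<beta> * l / \<Gamma>\<^sup>2)
      \<le> 36 * (c * d * sT * sl) * ((3/2 * ln (1 + 3/2 * b * c) + 1) * l)"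
    using ratio lnarg b c \<beta> l sl sT d unfolding \<Gamma>
    by (intro mult_left_mono mult_mono) (auto intro: add_nonneg_nonneg)
  then show ?thesis
    unfolding first l_def[symmetric] sT_def[symmetric] p by (simp add: algebra_simps)
qed
lemma F2_le_rate:
  fixes R S L lam :: real
  assumes "lam > 0" and "R \<ge> 0" and "S \<ge> 0" and "L \<ge> 0" and "sqrt lam * S \<ge> 1"
    and "dim P \<ge> 1" and "T \<ge> 2" and "assumption1 S L P T" and "subgauss_noise R T M"
    and "real (dim P) * ln (real T) powr (3/2) / sqrt (real T) < 1"
  shows "F2 R S L lam P T M
    \<le> (2 + 36 * beta_rate R S L lam * (3/2 * ln (1 + 3/2 * (L\<^sup>2 / lam) * beta_rate R S L lam) + 1))
         * real (dim P) * sqrt (real T) * ln (real T) powr (3/2)"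
proof -
  let ?\<beta> = "beta_T R S L lam (dim P) T"
  define \<Gamma> where "\<Gamma> = real (dim P) * ln (real T) powr (3/2) / sqrt (real T)"
  have "0 < \<Gamma>" unfolding \<Gamma>_def using assms by simp
  then have F2: "F2 R S L lam P T M \<le> 2 * real T * \<Gamma>
      + 36 * (real (dim P) * ?\<beta> * ln (real T) / \<Gamma>) * ln (1 + L\<^sup>2 * ?\<beta> * ln (real T) / (lam * \<Gamma>\<^sup>2))"
    using F2_le[OF assms(1-9)] assms(10) unfolding \<Gamma>_def by blast
  have eq: "L\<^sup>2 * ?\<beta> * ln (real T) / (lam * \<Gamma>\<^sup>2) = L\<^sup>2 / lam * ?\<beta> * ln (real T) / \<Gamma>\<^sup>2"
    by simp
  have "2 * real T * \<Gamma>
      + 36 * (real (dim P) * ?\<beta> * ln (real T) / \<Gamma>) * ln (1 + L\<^sup>2 / lam * ?\<beta> * ln (real T) / \<Gamma>\<^sup>2)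
    \<le> (2 + 36 * beta_rate R S L lam * (3/2 * ln (1 + 3/2 * (L\<^sup>2 / lam) * beta_rate R S L lam) + 1))
         * real (dim P) * sqrt (real T) * ln (real T) powr (3/2)"
    unfolding \<Gamma>_def using assms beta_T_le[OF assms(1)]
    by (intro threshold_bound_at_choice) (auto simp: beta_T_def lin_beta_def)
  then show ?thesis using F2[unfolded eq] by linarith
qed

theorem lemma3:
  fixes R S L lam :: real
  assumes "lam > 0" and "R \<ge> 0" and "S \<ge> 0" and "L \<ge> 0"
    and "sqrt lam * S \<ge> 1"
  shows "(\<exists>C. \<forall>(P :: lb_instance) T M \<Gamma>.
            dim P \<ge> 1 \<and> T \<ge> 2 \<and> assumption1 S L P T \<and> subgauss_noise R T M \<and> 0 < \<Gamma> \<and> \<Gamma> < 1 \<longrightarrow>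
            F2 R S L lam P T M
              \<le> 2 * real T * \<Gamma>
                 + C * (real (dim P) * beta_T R S L lam (dim P) T * ln (real T) / \<Gamma>)
                     * ln (1 + L\<^sup>2 * beta_T R S L lam (dim P) T * ln (real T) / (lam * \<Gamma>\<^sup>2)))
       \<and> (\<exists>C. \<forall>(P :: lb_instance) T M.
            dim P \<ge> 1 \<and> T \<ge> 2 \<and> assumption1 S L P T \<and> subgauss_noise R T M \<and>
            real (dim P) * ln (real T) powr (3/2) / sqrt (real T) < 1 \<longrightarrow>
            F2 R S L lam P T M \<le> C * real (dim P) * sqrt (real T) * ln (real T) powr (3/2))"
  using F2_le[OF assms] F2_le_rate[OF assms] by blast

end
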